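(* Let $n\in\{2,3,\ldots\}$ and let $X_n$ be the minimal clade size in the Bolthausen-Sznitman $n$-coalescent. For $m\in\mathbb{N}$ let $A^{(m)}_i$ be the number of tables with exactly $i$ customers in a $CRP(m)$ and $K_m=\sum_{i=1}^m A^{(m)}_i$ the number of occupied tables; set $K_0=0$. Then for $j\in\{1,\ldots,n-1\}$: (a) With $\Gamma_n=\{(a_1,\ldots,a_{n-1})\in\{0,\ldots,n-1\}^{n-1}:\sum_{i=1}^{n-1} i a_i=n-1\}$, $$P(X_n=j+1)=E\left(\frac{A^{(n-1)}_j}{K_{n-1}}\right)=\sum_{(a_1,\ldots,a_{n-1})\in\Gamma_n}\frac{a_j}{\sum_{i=1}^{n-1}a_i}\prod_{i=1}^{n-1}\frac{1}{a_i!\,i^{a_i}}.$$ (b) With $\Delta(m,k)=\{(n_1,\ldots,n_k)\in\{1,\ldots,m\}^k:\sum_{i=1}^k n_i=m\}$ for $k\le m$, for $j<n-1$ $$P(X_n=j+1)=\frac1j\sum_{k=1}^{n-1-j}\frac{1}{(k+1)!}\sum_{(n_1,\ldots,n_k)\in\Delta(n-1-j,k)}\frac{1}{n_1\cdots n_k},$$ and $P(X_n=n)=\frac{1}{n-1}$. (c) Let $B_1,B_2,\ldots$ be independent Bernoulli random variables with $P(B_i=1)=1/i$. Then $$P(X_n=j+1)=\frac1j E\left(\frac{1}{1+K_{n-1-j}}\right)=\frac1j E\left(\frac{1}{1+\sum_{i=1}^{n-1-j}B_i}\right).$$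
   Context: The Bolthausen-Sznitman $n$-coalescent $(\Pi^{(n)}_t)_{t\ge0}$ is the continuous-time Markov process on partitions of $[n]=\{1,\ldots,n\}$, started from singletons, whose only transitions are mergers of several blocks into one: when there are $b$ blocks, each given $k$-tuple of blocks ($2\le k\le b$) merges at rate $\frac{(k-2)!(b-k)!}{(b-1)!}$. For a partition $\eta$ let $C_i(\eta)$ be the block containing $i$. Let $I$ be uniform on $[n]$ independent of the coalescent, $E_n=\inf\{t\ge0:C_I(\Pi^{(n)}_t)\ne\{I\}\}$, and the minimal clade size $X_n=|C_I(\Pi^{(n)}_{E_n})|$. The standard Chinese restaurant process $CRP(m)$ with $m$ customers: customer 1 sits at table 1; after $i-1$ customers are seated, customer $i$ chooses uniformly among the $i$ options of sitting directly to the left of one of the $i-1$ seated customers or at a new table. *)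

theory Defs
  imports "HOL-Probability.Probability"
begin

text \<open>Rate at which a given k-tuple of blocks merges when there are b blocks.\<close>
definition bs_rate :: "nat \<Rightarrow> nat \<Rightarrow> real" where
  "bs_rate b k = fact (k - 2) * fact (b - k) / fact (b - 1)"

definition mergers :: "nat set set \<Rightarrow> nat set set set" where
  "mergers P = {S. S \<subseteq> P \<and> 2 \<le> card S}"

definition total_rate :: "nat set set \<Rightarrow> real" where
  "total_rate P = (\<Sum>S\<in>mergers P. bs_rate (card P) (card S))"

text \<open>Embedded jump chain of the coalescent.  clade_prob f i P k is the
  probability, starting from partition P (in which i is a singleton), that the block
  containing i at the first jump involving i has exactly k elements; f is fuel
  (number of jumps allowed, n suffices when starting with n blocks).\<close>
primrec clade_prob :: "nat \<Rightarrow> nat \<Rightarrow> nat set set \<Rightarrow> nat \<Rightarrow> real" where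
  "clade_prob 0 i P k = 0"
| "clade_prob (Suc f) i P k =
     (\<Sum>S\<in>mergers P. bs_rate (card P) (card S) / total_rate P *
        (if {i} \<in> S then (if card (\<Union>S) = k then 1 else 0)
         else clade_prob f i ((P - S) \<union> {\<Union>S}) k))"

text \<open>P(X_n = k), with I uniform on [n] independent of the coalescent.\<close>
definition minclade_prob :: "nat \<Rightarrow> nat \<Rightarrow> real" where
  "minclade_prob n k =
     (\<Sum>i\<in>{1..n}. clade_prob n i ((\<lambda>x. {x}) ` {1..n}) k) / real n"

text \<open>A seating is encoded by sigma: sigma c is the customer sitting directly to the
  right of c (cyclically at its table); sigma is the identity outside seated customers.\<close>
definition sit_left :: "(nat \<Rightarrow> nat) \<Rightarrow> nat \<Rightarrow> nat \<Rightarrow> nat \<Rightarrow> nat" where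
  "sit_left \<sigma> x c = (\<lambda>y. if y = x then c else if \<sigma> y = c then x else \<sigma> y)"

primrec crp :: "nat \<Rightarrow> (nat \<Rightarrow> nat) pmf" where
  "crp 0 = return_pmf id"
| "crp (Suc m) =
     crp m \<bind> (\<lambda>\<sigma>. pmf_of_set {1..Suc m} \<bind>
        (\<lambda>c. return_pmf (if c = Suc m then \<sigma> else sit_left \<sigma> (Suc m) c)))"

definition crp_table :: "(nat \<Rightarrow> nat) \<Rightarrow> nat \<Rightarrow> nat set" where
  "crp_table \<sigma> c = {(\<sigma> ^^ k) c | k. True}"

definition crp_tables :: "nat \<Rightarrow> (nat \<Rightarrow> nat) \<Rightarrow> nat set set" where
  "crp_tables m \<sigma> = crp_table \<sigma> ` {1..m}"

definition crp_A :: "nat \<Rightarrow> nat \<Rightarrow> (nat \<Rightarrow> nat) \<Rightarrow> nat" where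
  "crp_A m i \<sigma> = card {T \<in> crp_tables m \<sigma>. card T = i}"

definition crp_K :: "nat \<Rightarrow> (nat \<Rightarrow> nat) \<Rightarrow> nat" where
  "crp_K m \<sigma> = card (crp_tables m \<sigma>)"

definition Gamma_set :: "nat \<Rightarrow> (nat \<Rightarrow> nat) set" where
  "Gamma_set n = {a \<in> {1..n-1} \<rightarrow>\<^sub>E {0..n-1}. (\<Sum>i=1..n-1. i * a i) = n - 1}"

definition Delta_set :: "nat \<Rightarrow> nat \<Rightarrow> (nat \<Rightarrow> nat) set" where
  "Delta_set m k = {v \<in> {1..k} \<rightarrow>\<^sub>E {1..m}. (\<Sum>i=1..k. v i) = m}"

definition bern_seq :: "nat \<Rightarrow> (nat \<Rightarrow> bool) pmf" where
  "bern_seq m = Pi_pmf {1..m} False (\<lambda>i. bernoulli_pmf (1 / real i))"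

end

theory Submission
  imports Defs "HOL-Combinatorics.Orbits" "HOL-Combinatorics.Stirling"
begin

text \<open>
  The block of I at its first merger has size j + 1 exactly when it absorbs j of the other
  n - 1 singletons. A first-step analysis of the jump chain shows that the probability of
  absorbing a given set of l of the b - 1 other blocks depends only on b and l, namely
  (l - 1)! (b - 1 - l)! f(b - 1 - l) / (b - 1)! with f(m) = E[1 / (1 + K_m)]. The recursion
  this requires reduces to a recursion for f, which follows from the law
  P(K_m = k) = stirling m k / m! of the number of tables. Hence P(X_n = j + 1) = f(n - 1 - j) / j.
  The same Stirling law is that of a sum of independent Bernoulli(1/i) variables and yields the
  formula over compositions. Finally, the Ewens sampling formula for the table sizes of
  CRP(n - 1), combined with the bijection that removes one table of size j, turns
  E[A_j / K] into f(n - 1 - j) / j as well.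
\<close>

section \<open>The Stirling law of the number of tables\<close>

definition tables_prob :: "nat \<Rightarrow> nat \<Rightarrow> real" where
  "tables_prob m k = real (stirling m k) / fact m"

lemma tables_prob_0_left [simp]: "tables_prob 0 k = (if k = 0 then 1 else 0)"
  by (cases k) (simp_all add: tables_prob_def)

lemma tables_prob_Suc [simp]:
  "tables_prob (Suc m) k = (real m * tables_prob m k + (if k = 0 then 0 else tables_prob m (k - 1))) / real (Suc m)"
proof (cases k)
  case 0
  then show ?thesis by (cases m) (simp_all add: tables_prob_def)
next
  case (Suc k')
  have "real (stirling (Suc m) (Suc k')) = real m * real (stirling m (Suc k')) + real (stirling m k')"
    by simp
  then show ?thesis
    using Suc by (simp add: tables_prob_def field_simps)
qed

lemma tables_prob_0: "tables_prob m 0 = (if m = 0 then 1 else 0)"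
  by (induction m) auto

definition tables_prob_shift :: "nat \<Rightarrow> nat \<Rightarrow> real" where
  "tables_prob_shift m k = (if k = 0 then 0 else tables_prob m (k - 1))"

lemma tables_prob_Suc_mult: "real (Suc m) * tables_prob (Suc m) k = real m * tables_prob m k + tables_prob_shift m k"
  by (simp add: tables_prob_shift_def)

lemma tables_prob_shift_Suc_mult: "real (Suc m) * tables_prob_shift (Suc m) k = real m * tables_prob_shift m k + tables_prob_shift m (k - 1)"
  by (cases k) (auto simp: tables_prob_shift_def tables_prob_Suc_mult)

lemma tables_prob_eq_0: "m < k \<Longrightarrow> tables_prob m k = 0"
  by (induction m arbitrary: k) auto

lemma sum_tables_prob: "(\<Sum>k=0..m. tables_prob m k) = 1"
proof (induction m)
  case 0 then show ?case by simp
next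
  case (Suc m)
  have "(\<Sum>k=0..Suc m. tables_prob (Suc m) k) = (\<Sum>k=0..Suc m. (real m * tables_prob m k + tables_prob_shift m k)) / real (Suc m)"
    unfolding tables_prob_Suc tables_prob_shift_def by (simp only: sum_divide_distrib)
  also have "(\<Sum>k=0..Suc m. (real m * tables_prob m k + tables_prob_shift m k)) = real m * (\<Sum>k=0..Suc m. tables_prob m k) + (\<Sum>k=0..Suc m. tables_prob_shift m k)"
    by (simp add: sum.distrib sum_distrib_left distrib_left)
  also have "(\<Sum>k=0..Suc m. tables_prob m k) = 1" using Suc by (simp add: tables_prob_eq_0)
  also have "(\<Sum>k=0..Suc m. tables_prob_shift m k) = (\<Sum>k=0..m. tables_prob m k)"
    by (subst sum.atLeast0_atMost_Suc_shift) (simp add: tables_prob_shift_def)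
  finally show ?case using Suc by simp
qed

lemma Suc_mult_sum_tables_prob_shift:
  "real (Suc m) * (\<Sum>r=1..Suc m. tables_prob_shift (Suc m - r) (Suc k) / real r)
     = real m * (\<Sum>r=1..m. tables_prob_shift (m - r) (Suc k) / real r)
     + (\<Sum>r=1..m. tables_prob_shift (m - r) k / real r) + tables_prob_shift m (Suc k)"
proof -
  have step: "real (Suc m - r) * tables_prob_shift (Suc m - r) (Suc k)
      = real (m - r) * tables_prob_shift (m - r) (Suc k) + tables_prob_shift (m - r) k"
    if "r \<in> {1..m}" for r
  proof -
    from that have "Suc m - r = Suc (m - r)" by auto
    then show ?thesis using tables_prob_shift_Suc_mult[of "m - r" "Suc k"] by simp
  qed
  have "real (Suc m) * (\<Sum>r=1..Suc m. tables_prob_shift (Suc m - r) (Suc k) / real r)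
      = (\<Sum>r=1..Suc m. (real (Suc m - r) * tables_prob_shift (Suc m - r) (Suc k)) / real r)
      + (\<Sum>r=1..Suc m. tables_prob_shift (Suc m - r) (Suc k))"
    by (simp add: sum_distrib_left sum.distrib[symmetric] field_simps of_nat_diff)
  also have "(\<Sum>r=1..Suc m. (real (Suc m - r) * tables_prob_shift (Suc m - r) (Suc k)) / real r)
      = (\<Sum>r=1..m. (real (Suc m - r) * tables_prob_shift (Suc m - r) (Suc k)) / real r)"
    by simp
  also have "\<dots> = (\<Sum>r=1..m. (real (m - r) * tables_prob_shift (m - r) (Suc k) + tables_prob_shift (m - r) k) / real r)"
    by (intro sum.cong refl) (simp only: step)
  also have "\<dots> = (\<Sum>r=1..m. (real (m - r) * tables_prob_shift (m - r) (Suc k)) / real r)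
      + (\<Sum>r=1..m. tables_prob_shift (m - r) k / real r)"
    by (simp add: sum.distrib[symmetric] add_divide_distrib)
  also have "(\<Sum>r=1..m. (real (m - r) * tables_prob_shift (m - r) (Suc k)) / real r)
      = real m * (\<Sum>r=1..m. tables_prob_shift (m - r) (Suc k) / real r) - (\<Sum>r=1..m. tables_prob_shift (m - r) (Suc k))"
    by (simp add: sum_distrib_left sum_subtractf[symmetric] field_simps of_nat_diff)
  also have "(\<Sum>r=1..Suc m. tables_prob_shift (Suc m - r) (Suc k))
      = (\<Sum>r=1..m. tables_prob_shift (m - r) (Suc k)) + tables_prob_shift m (Suc k)"
  proof -
    have "(\<Sum>r=1..Suc m. tables_prob_shift (Suc m - r) (Suc k)) = (\<Sum>r=0..m. tables_prob_shift (m - r) (Suc k))"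
      unfolding One_nat_def sum.shift_bounds_cl_Suc_ivl by simp
    then show ?thesis by (simp add: sum.atLeast_Suc_atMost)
  qed
  finally show ?thesis by simp
qed

text \<open>Coefficientwise form of G_m' = (\<Sum>r=1..m. G_(m-r) / r) for the generating function
  G_m(x) = x(x+1)\<cdots>(x+m-1) / m! of tables_prob m.\<close>
lemma index_mult_tables_prob: "real k * tables_prob m k = (\<Sum>r=1..m. tables_prob_shift (m - r) k / real r)"
proof (induction m arbitrary: k)
  case 0 then show ?case by (simp add: tables_prob_eq_0)
next
  case (Suc m)
  show ?case
  proof (cases k)
    case 0 then show ?thesis by (simp add: tables_prob_shift_def)
  next
    case (Suc k')
    have shift: "real k * tables_prob_shift m k = (\<Sum>r=1..m. tables_prob_shift (m - r) k' / real r) + tables_prob_shift m k"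
      using Suc.IH[of k'] Suc by (simp add: tables_prob_shift_def algebra_simps)
    have "real (Suc m) * (real k * tables_prob (Suc m) k) = real k * (real m * tables_prob m k + tables_prob_shift m k)"
      by (subst mult.left_commute, subst tables_prob_Suc_mult) simp
    also have "\<dots> = real m * (\<Sum>r=1..m. tables_prob_shift (m - r) k / real r)
        + (\<Sum>r=1..m. tables_prob_shift (m - r) k' / real r) + tables_prob_shift m k"
      using Suc.IH[of k] shift by (simp add: algebra_simps)
    also have "\<dots> = real (Suc m) * (\<Sum>r=1..Suc m. tables_prob_shift (Suc m - r) k / real r)"
      unfolding Suc by (rule Suc_mult_sum_tables_prob_shift[symmetric])
    finally show ?thesis by simp
  qed
qed

lemma sum_tables_prob_extend: "s \<le> N \<Longrightarrow> (\<Sum>k=0..N. tables_prob s k * g k) = (\<Sum>k=0..s. tables_prob s k * g k)"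
  by (rule sum.mono_neutral_right) (auto simp: tables_prob_eq_0)

lemma sum_diff_div_by_parts:
  fixes x :: "nat \<Rightarrow> real"
  assumes x0: "x 0 = 0"
  shows "(\<Sum>r=1..m. (x (Suc m - r) - x (m - r)) / real r) = x m - (\<Sum>r=2..m. x (Suc m - r) / (real r * (real r - 1)))"
proof (cases m)
  case 0 then show ?thesis by (simp add: x0)
next
  case (Suc m')
  have S1: "(\<Sum>r=1..m. x (Suc m - r) / real r) = x m + (\<Sum>r=2..m. x (Suc m - r) / real r)"
    using Suc by (simp add: sum.atLeast_Suc_atMost numeral_2_eq_2)
  have "(\<Sum>r=1..m. x (m - r) / real r) = (\<Sum>r=2..Suc m. x (Suc m - r) / (real r - 1))"
    unfolding numeral_2_eq_2 sum.shift_bounds_cl_Suc_ivl by simp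
  also have "\<dots> = (\<Sum>r=2..m. x (Suc m - r) / (real r - 1))"
    using Suc by (simp add: x0)
  finally have S2: "(\<Sum>r=1..m. x (m - r) / real r) = (\<Sum>r=2..m. x (Suc m - r) / (real r - 1))" .
  have S3: "(\<Sum>r=2..m. x (Suc m - r) / real r) - (\<Sum>r=2..m. x (Suc m - r) / (real r - 1))
      = - (\<Sum>r=2..m. x (Suc m - r) / (real r * (real r - 1)))"
  proof -
    have "\<And>r. r \<in> {2..m} \<Longrightarrow> x (Suc m - r) / real r - x (Suc m - r) / (real r - 1) = - (x (Suc m - r) / (real r * (real r - 1)))"
    proof -
      fix r :: nat assume "r \<in> {2..m}"
      then have "real r \<ge> 2" by auto
      then show "x (Suc m - r) / real r - x (Suc m - r) / (real r - 1) = - (x (Suc m - r) / (real r * (real r - 1)))"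
        by (simp add: field_simps)
    qed
    then show ?thesis by (simp add: sum_subtractf[symmetric] sum_negf[symmetric])
  qed
  show ?thesis
    using S1 S2 S3 by (simp add: diff_divide_distrib sum_subtractf)
qed

lemma tables_prob_complement_rec: "(real m - real k) * tables_prob m k = (\<Sum>r=2..m. real (Suc m - r) * tables_prob (Suc m - r) k / (real r * (real r - 1)))"
proof -
  define x where "x s = real s * tables_prob s k" for s
  have d: "\<And>s. x (Suc s) - x s = tables_prob_shift s k" unfolding x_def using tables_prob_Suc_mult by (simp add: algebra_simps)
  have "(\<Sum>r=1..m. (x (Suc m - r) - x (m - r)) / real r) = (\<Sum>r=1..m. tables_prob_shift (m - r) k / real r)"
  proof (intro sum.cong refl)
    fix r assume "r \<in> {1..m}"
    then have "Suc m - r = Suc (m - r)" by auto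
    then show "(x (Suc m - r) - x (m - r)) / real r = tables_prob_shift (m - r) k / real r" by (simp add: d)
  qed
  also have "\<dots> = real k * tables_prob m k" by (simp add: index_mult_tables_prob)
  finally have "real k * tables_prob m k = x m - (\<Sum>r=2..m. x (Suc m - r) / (real r * (real r - 1)))"
    using sum_diff_div_by_parts[of x m] by (simp add: x_def)
  then show ?thesis by (simp add: x_def algebra_simps)
qed

definition mean_inv_Suc_tables :: "nat \<Rightarrow> real" where
  "mean_inv_Suc_tables m = (\<Sum>k=0..m. tables_prob m k / real (Suc k))"

lemma mean_inv_Suc_tables_rec: "real (Suc m) * mean_inv_Suc_tables m = 1 + (\<Sum>r=2..m. real (Suc m - r) * mean_inv_Suc_tables (Suc m - r) / (real r * (real r - 1)))"
proof -
  have "real (Suc m) * mean_inv_Suc_tables m = (\<Sum>k=0..m. (real m - real k) * tables_prob m k / real (Suc k)) + (\<Sum>k=0..m. tables_prob m k)"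
    unfolding mean_inv_Suc_tables_def sum_distrib_left sum.distrib[symmetric]
    by (intro sum.cong refl) (simp add: field_simps)
  also have "(\<Sum>k=0..m. tables_prob m k) = 1" by (rule sum_tables_prob)
  also have "(\<Sum>k=0..m. (real m - real k) * tables_prob m k / real (Suc k))
     = (\<Sum>k=0..m. \<Sum>r=2..m. real (Suc m - r) * tables_prob (Suc m - r) k / (real r * (real r - 1)) / real (Suc k))"
    by (simp add: tables_prob_complement_rec sum_divide_distrib)
  also have "\<dots> = (\<Sum>r=2..m. \<Sum>k=0..m. real (Suc m - r) / (real r * (real r - 1)) * (tables_prob (Suc m - r) k * (1 / real (Suc k))))"
    by (subst sum.swap) (simp add: field_simps)
  also have "\<dots> = (\<Sum>r=2..m. real (Suc m - r) * mean_inv_Suc_tables (Suc m - r) / (real r * (real r - 1)))"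
  proof (intro sum.cong refl)
    fix r assume r: "r \<in> {2..m}"
    have "(\<Sum>k=0..m. tables_prob (Suc m - r) k * (1 / real (Suc k))) = (\<Sum>k=0..Suc m - r. tables_prob (Suc m - r) k * (1 / real (Suc k)))"
      using r by (intro sum_tables_prob_extend) auto
    also have "\<dots> = mean_inv_Suc_tables (Suc m - r)" unfolding mean_inv_Suc_tables_def by simp
    finally have ff1: "(\<Sum>k=0..m. tables_prob (Suc m - r) k * (1 / real (Suc k))) = mean_inv_Suc_tables (Suc m - r)" .
    show "(\<Sum>k=0..m. real (Suc m - r) / (real r * (real r - 1)) * (tables_prob (Suc m - r) k * (1 / real (Suc k))))
        = real (Suc m - r) * mean_inv_Suc_tables (Suc m - r) / (real r * (real r - 1))"
      unfolding sum_distrib_left[symmetric] ff1 by simp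
  qed
  finally show ?thesis by simp
qed

section \<open>Absorption probabilities in the Bolthausen-Sznitman coalescent\<close>

lemma fact_reduce2: "2 \<le> r \<Longrightarrow> (fact r :: real) = real r * (real r - 1) * fact (r - 2)"
proof -
  assume "2 \<le> r"
  then obtain s where "r = Suc (Suc s)" by (metis add_2_eq_Suc le_Suc_ex)
  then show ?thesis by (simp add: algebra_simps)
qed

lemma choose_mult_fact_minus2: "2 \<le> r \<Longrightarrow> r \<le> l \<Longrightarrow>
   real (l choose r) * fact (r - 2) * fact (l - r) = fact l / (real r * (real r - 1))"
proof -
  assume r: "2 \<le> r" "r \<le> l"
  have a: "(fact r :: real) * fact (l - r) * real (l choose r) = fact l"
    using binomial_fact_lemma[OF r(2)] by (metis of_nat_fact of_nat_mult)
  have pos: "real r * (real r - 1) \<noteq> 0" using r by auto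
  have "real r * (real r - 1) * (real (l choose r) * fact (r - 2) * fact (l - r)) = fact l"
    using a unfolding fact_reduce2[OF r(1)] by (simp add: ac_simps)
  then show ?thesis using pos by (simp add: nonzero_eq_divide_eq ac_simps)
qed

lemma sum_inverse_consecutive_products: "1 \<le> l \<Longrightarrow> (\<Sum>r=2..l. 1 / (real r * (real r - 1))) = 1 - 1 / real l"
proof (induction l)
  case 0 then show ?case by simp
next
  case (Suc l)
  show ?case
  proof (cases "l = 0")
    case True then show ?thesis by simp
  next
    case False
    then have IH: "(\<Sum>r=2..l. 1 / (real r * (real r - 1))) = 1 - 1 / real l" using Suc by simp
    have "(\<Sum>r=2..Suc l. 1 / (real r * (real r - 1))) = (\<Sum>r=2..l. 1 / (real r * (real r - 1))) + 1 / (real (Suc l) * real l)"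
      using False by (simp add: sum.cl_ivl_Suc)
    also have "\<dots> = 1 - 1 / real (Suc l)" unfolding IH using False
      by (simp add: field_simps) (smt (verit) of_nat_0_less_iff mult_pos_pos)
    finally show ?thesis .
  qed
qed

lemma sum_binomial_bs_rate: "2 \<le> b \<Longrightarrow> (\<Sum>r=2..b. real (b choose r) * bs_rate b r) = real b - 1"
proof -
  assume b: "2 \<le> b"
  have "\<And>r. r \<in> {2..b} \<Longrightarrow> real (b choose r) * bs_rate b r = real b * (1 / (real r * (real r - 1)))"
  proof -
    fix r assume r: "r \<in> {2..b}"
    have "real (b choose r) * fact (r - 2) * fact (b - r) = fact b / (real r * (real r - 1))"
      using r by (intro choose_mult_fact_minus2) auto
    moreover have "(fact b :: real) = real b * fact (b - 1)" using b by (simp add: fact_reduce)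
    ultimately have "real (b choose r) * fact (r - 2) * fact (b - r) = real b * fact (b - 1) / (real r * (real r - 1))"
      by simp
    then have "real (b choose r) * bs_rate b r = real b * fact (b - 1) / (real r * (real r - 1)) / fact (b - 1)"
      unfolding bs_rate_def by (simp add: ac_simps)
    then show "real (b choose r) * bs_rate b r = real b * (1 / (real r * (real r - 1)))"
      by simp
  qed
  then have "(\<Sum>r=2..b. real (b choose r) * bs_rate b r) = real b * (\<Sum>r=2..b. 1 / (real r * (real r - 1)))"
    by (simp add: sum_distrib_left)
  also have "\<dots> = real b - 1" using b by (subst sum_inverse_consecutive_products) (auto simp: field_simps)
  finally show ?thesis .
qed

text \<open>absorb_prob b l is the probability that, among b blocks, the block of a fixed
  singleton absorbs exactly a given set of l other blocks at its first merger.\<close>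
definition absorb_prob :: "nat \<Rightarrow> nat \<Rightarrow> real" where
  "absorb_prob b l = (if l = 0 then 0 else fact (l - 1) * fact (b - 1 - l) * mean_inv_Suc_tables (b - 1 - l) / fact (b - 1))"

lemma bs_rate_absorb_first: "l \<noteq> 0 \<Longrightarrow> bs_rate (l + m + 1) (l + 1) = fact (l - 1) * fact m / fact (l + m)"
  unfolding bs_rate_def by simp

lemma sum_absorb_prob_within:
  assumes l: "l \<noteq> 0"
  shows "(\<Sum>r=2..l. real (l choose r) * bs_rate (l + m + 1) r * absorb_prob (l + m + 2 - r) (l + 1 - r))
       = bs_rate (l + m + 1) (l + 1) * (real l - 1) * mean_inv_Suc_tables m"
proof -
  define c where "c = fact (l - 1) * fact m / (fact (l + m) :: real)"
  have summand: "real (l choose r) * bs_rate (l + m + 1) r * absorb_prob (l + m + 2 - r) (l + 1 - r)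
        = c * real l * mean_inv_Suc_tables m * (1 / (real r * (real r - 1)))" if r: "r \<in> {2..l}" for r
  proof -
    have e: "l + m + 1 - r = Suc (l + m - r)" "l + m + 2 - r - 1 - (l + 1 - r) = m" "l + 1 - r - 1 = l - r"
      "l + m + 2 - r - 1 = Suc (l + m - r)" "l + 1 - r \<noteq> 0" using r by auto
    have cf: "real (l choose r) * fact (r - 2) * fact (l - r) = fact l / (real r * (real r - 1))"
      using r by (intro choose_mult_fact_minus2) auto
    have fl: "(fact l :: real) = real l * fact (l - 1)" using l by (simp add: fact_reduce)
    have "real (l choose r) * bs_rate (l + m + 1) r * absorb_prob (l + m + 2 - r) (l + 1 - r)
        = (real (l choose r) * fact (r - 2) * fact (l - r)) * fact m * mean_inv_Suc_tables m / fact (l + m)"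
      unfolding bs_rate_def absorb_prob_def by (simp add: e del: fact_Suc)
    also have "\<dots> = c * real l * mean_inv_Suc_tables m * (1 / (real r * (real r - 1)))"
      unfolding cf c_def fl by (simp add: field_simps)
    finally show ?thesis .
  qed
  have "(\<Sum>r=2..l. real (l choose r) * bs_rate (l + m + 1) r * absorb_prob (l + m + 2 - r) (l + 1 - r))
      = c * real l * mean_inv_Suc_tables m * (\<Sum>r=2..l. 1 / (real r * (real r - 1)))"
    unfolding sum_distrib_left by (rule sum.cong[OF refl summand])
  also have "\<dots> = c * (real l - 1) * mean_inv_Suc_tables m"
    using l by (subst sum_inverse_consecutive_products) (auto simp: field_simps)
  finally show ?thesis unfolding c_def bs_rate_absorb_first[OF l] .
qed

lemma sum_absorb_prob_outside:
  assumes l: "l \<noteq> 0"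
  shows "(\<Sum>r=2..m. real (m choose r) * bs_rate (l + m + 1) r * absorb_prob (l + m + 2 - r) l)
       = bs_rate (l + m + 1) (l + 1) * (real (Suc m) * mean_inv_Suc_tables m - 1)"
proof -
  define c where "c = fact (l - 1) * fact m / (fact (l + m) :: real)"
  have summand: "real (m choose r) * bs_rate (l + m + 1) r * absorb_prob (l + m + 2 - r) l
        = c * (real (Suc m - r) * mean_inv_Suc_tables (Suc m - r) / (real r * (real r - 1)))"
    if r: "r \<in> {2..m}" for r
  proof -
    have e: "l + m + 1 - r = Suc (l + m - r)" "l + m + 2 - r - 1 - l = Suc (m - r)"
      "l + m + 2 - r - 1 = Suc (l + m - r)" "Suc m - r = Suc (m - r)" using r by auto
    have cf: "real (m choose r) * fact (r - 2) * fact (m - r) = fact m / (real r * (real r - 1))"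
      using r by (intro choose_mult_fact_minus2) auto
    have "real (m choose r) * bs_rate (l + m + 1) r * absorb_prob (l + m + 2 - r) l
        = (real (m choose r) * fact (r - 2) * fact (m - r)) * real (Suc (m - r)) * fact (l - 1)
          * mean_inv_Suc_tables (Suc (m - r)) / fact (l + m)"
      unfolding bs_rate_def absorb_prob_def using l by (simp add: e del: fact_Suc) (simp add: algebra_simps)
    also have "\<dots> = c * (real (Suc m - r) * mean_inv_Suc_tables (Suc m - r) / (real r * (real r - 1)))"
      unfolding cf c_def e by (simp add: field_simps)
    finally show ?thesis .
  qed
  have "(\<Sum>r=2..m. real (m choose r) * bs_rate (l + m + 1) r * absorb_prob (l + m + 2 - r) l)
      = c * (\<Sum>r=2..m. real (Suc m - r) * mean_inv_Suc_tables (Suc m - r) / (real r * (real r - 1)))"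
    unfolding sum_distrib_left by (rule sum.cong[OF refl summand])
  also have "\<dots> = c * (real (Suc m) * mean_inv_Suc_tables m - 1)"
    using mean_inv_Suc_tables_rec[of m] by simp
  finally show ?thesis unfolding c_def bs_rate_absorb_first[OF l] .
qed

text \<open>The first-step recursion for absorb_prob: the block of the fixed singleton either merges
  directly with the l prescribed blocks, or r of them merge first, or r of the m others do.\<close>
lemma absorb_prob_rec:
  "real (l + m) * absorb_prob (l + m + 1) l =
     (if l \<noteq> 0 then bs_rate (l + m + 1) (l + 1) else 0)
   + (\<Sum>r=2..l. real (l choose r) * bs_rate (l + m + 1) r * absorb_prob (l + m + 2 - r) (l + 1 - r))
   + (\<Sum>r=2..m. real (m choose r) * bs_rate (l + m + 1) r * absorb_prob (l + m + 2 - r) l)"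
proof (cases "l = 0")
  case True then show ?thesis by (simp add: absorb_prob_def)
next
  case False
  have "real (l + m) * absorb_prob (l + m + 1) l
      = bs_rate (l + m + 1) (l + 1) * real (l + m) * mean_inv_Suc_tables m"
    unfolding absorb_prob_def bs_rate_absorb_first[OF False] using False by simp
  then show ?thesis
    using False unfolding sum_absorb_prob_within[OF False] sum_absorb_prob_outside[OF False]
    by (simp add: algebra_simps)
qed

lemma sum_subsets_card_ge2:
  fixes \<phi> :: "nat \<Rightarrow> real"
  assumes A: "finite A"
  shows "(\<Sum>S\<in>{S. S \<subseteq> A \<and> 2 \<le> card S}. \<phi> (card S)) = (\<Sum>r=2..card A. real (card A choose r) * \<phi> r)"
proof -
  let ?M = "{S. S \<subseteq> A \<and> 2 \<le> card S}"
  have fM: "finite ?M" by (rule finite_subset[of _ "Pow A"]) (auto simp: A)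
  have im: "card ` ?M \<subseteq> {2..card A}" using A by (auto intro: card_mono)
  have "(\<Sum>S\<in>?M. \<phi> (card S)) = (\<Sum>r\<in>{2..card A}. \<Sum>S\<in>{S \<in> ?M. card S = r}. \<phi> (card S))"
    by (rule sum.group[OF fM finite_atLeastAtMost im, symmetric])
  also have "\<dots> = (\<Sum>r=2..card A. real (card A choose r) * \<phi> r)"
  proof (intro sum.cong refl)
    fix r assume r: "r \<in> {2..card A}"
    have e: "{S \<in> ?M. card S = r} = {S. S \<subseteq> A \<and> card S = r}" using r by auto
    show "(\<Sum>S\<in>{S \<in> ?M. card S = r}. \<phi> (card S)) = real (card A choose r) * \<phi> r"
      unfolding e using n_subsets[OF A, of r] by simp
  qed
  finally show ?thesis .
qed

lemma absorb_prob_rec_subsets: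
  assumes Q: "finite Q" and L: "L \<subseteq> Q"
  shows "real (card Q) * absorb_prob (card Q + 1) (card L) =
     (if L \<noteq> {} then bs_rate (card Q + 1) (card L + 1) else 0)
   + (\<Sum>S\<in>{S. S \<subseteq> L \<and> 2 \<le> card S}. bs_rate (card Q + 1) (card S) * absorb_prob (card Q + 2 - card S) (card L + 1 - card S))
   + (\<Sum>S\<in>{S. S \<subseteq> Q - L \<and> 2 \<le> card S}. bs_rate (card Q + 1) (card S) * absorb_prob (card Q + 2 - card S) (card L))"
proof -
  have fL: "finite L" using Q L by (rule finite_subset[rotated])
  define l where "l = card L"
  define m where "m = card Q - card L"
  have lm: "card Q = l + m" unfolding l_def m_def using card_mono[OF Q L] by simp
  have cd: "card (Q - L) = m" unfolding m_def using card_Diff_subset[OF fL L] .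
  have Le: "(L \<noteq> {}) = (l \<noteq> 0)" unfolding l_def using fL by simp
  have "(\<Sum>S\<in>{S. S \<subseteq> L \<and> 2 \<le> card S}. bs_rate (card Q + 1) (card S) * absorb_prob (card Q + 2 - card S) (card L + 1 - card S))
      = (\<Sum>r=2..l. real (l choose r) * (bs_rate (l + m + 1) r * absorb_prob (l + m + 2 - r) (l + 1 - r)))"
    unfolding l_def lm[unfolded l_def] by (rule sum_subsets_card_ge2[OF fL])
  moreover have "(\<Sum>S\<in>{S. S \<subseteq> Q - L \<and> 2 \<le> card S}. bs_rate (card Q + 1) (card S) * absorb_prob (card Q + 2 - card S) (card L))
      = (\<Sum>r=2..m. real (m choose r) * (bs_rate (l + m + 1) r * absorb_prob (l + m + 2 - r) l))"
    unfolding cd[symmetric] lm l_def using sum_subsets_card_ge2[of "Q - L"] Q by simp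
  ultimately show ?thesis using absorb_prob_rec[of l m] Le unfolding lm l_def[symmetric]
    by (simp add: mult.assoc)
qed

definition clade_state :: "nat \<Rightarrow> nat set set \<Rightarrow> bool" where
  "clade_state i P \<longleftrightarrow> finite P \<and> {i} \<in> P \<and> (\<forall>B\<in>P. B \<noteq> {}) \<and> (\<forall>A\<in>P. \<forall>B\<in>P. A \<noteq> B \<longrightarrow> A \<inter> B = {})"

definition clade_size_ind :: "nat \<Rightarrow> nat \<Rightarrow> nat set set \<Rightarrow> real" where
  "clade_size_ind i k L = (if card (\<Union>(insert {i} L)) = k then 1 else 0)"

definition clade_prob_formula :: "nat \<Rightarrow> nat \<Rightarrow> nat set set \<Rightarrow> real" where
  "clade_prob_formula i k P = (\<Sum>L\<in>Pow (P - {{i}}). absorb_prob (card P) (card L) * clade_size_ind i k L)"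

lemma Union_merger_notin:
  assumes g: "clade_state i P" and S: "S \<subseteq> P" "2 \<le> card S"
  shows "\<Union>S \<notin> P"
proof
  assume U: "\<Union>S \<in> P"
  have "finite S" using g S(1) unfolding clade_state_def by (auto intro: finite_subset)
  then obtain A1 A2 where "A1 \<in> S" "A2 \<in> S" "A1 \<noteq> A2"
    using S(2) card_le_Suc0_iff_eq[of S] by fastforce
  then obtain A where A: "A \<in> S" "A \<noteq> \<Union>S" by metis
  then have AP: "A \<in> P" and "A \<subseteq> \<Union>S" using S(1) by auto
  moreover have "A \<inter> \<Union>S = {}" "A \<noteq> {}"
    using g AP U A(2) unfolding clade_state_def by (metis, metis)
  ultimately show False by blast
qed

lemma clade_state_merge:
  assumes g: "clade_state i P" and S: "S \<subseteq> P - {{i}}" "2 \<le> card S"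
  shows "clade_state i ((P - S) \<union> {\<Union>S})"
proof -
  have ne: "\<And>B. B \<in> P \<Longrightarrow> B \<noteq> {}" and dj: "\<And>A B. A \<in> P \<Longrightarrow> B \<in> P \<Longrightarrow> A \<noteq> B \<Longrightarrow> A \<inter> B = {}"
    using g unfolding clade_state_def by blast+
  have "S \<noteq> {}" using S(2) by auto
  then obtain A where "A \<in> S" by blast
  then have "\<Union>S \<noteq> {}" using ne S(1) by blast
  moreover have "B \<inter> \<Union>S = {}" if "B \<in> P - S" for B
    using that S(1) dj by blast
  ultimately show ?thesis using g S(1) ne dj unfolding clade_state_def by (auto simp: Int_commute)
qed

lemma card_merge:
  assumes "finite P" "S \<subseteq> P" "\<Union>S \<notin> P"
  shows "card ((P - S) \<union> {\<Union>S}) = card P + 1 - card S"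
  using assms card_mono[of P S] by (simp add: card_Diff_subset finite_subset)

lemma sum_Pow_insert:
  fixes g :: "'a set \<Rightarrow> real"
  assumes "finite A" "a \<notin> A"
  shows "(\<Sum>L\<in>Pow (insert a A). g L) = (\<Sum>L\<in>Pow A. g L) + (\<Sum>L\<in>Pow A. g (insert a L))"
proof -
  have d: "Pow A \<inter> insert a ` Pow A = {}" using assms by auto
  have inj: "inj_on (insert a) (Pow A)" using assms unfolding inj_on_def by (metis PowD Diff_insert_absorb subsetD)
  have "(\<Sum>L\<in>Pow (insert a A). g L) = (\<Sum>L\<in>Pow A \<union> insert a ` Pow A. g L)"
    by (simp add: Pow_insert)
  also have "\<dots> = (\<Sum>L\<in>Pow A. g L) + (\<Sum>L\<in>insert a ` Pow A. g L)"
    using assms d by (intro sum.union_disjoint) auto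
  also have "(\<Sum>L\<in>insert a ` Pow A. g L) = (\<Sum>L\<in>Pow A. g (insert a L))"
    using inj by (simp add: sum.reindex)
  finally show ?thesis .
qed

lemma sum_Pow_sum_subsets_swap:
  fixes F :: "'a set \<Rightarrow> 'a set \<Rightarrow> real"
  assumes Q: "finite Q"
  shows "(\<Sum>L\<in>Pow Q. \<Sum>S\<in>{S. S \<subseteq> L \<and> 2 \<le> card S}. F S L)
       = (\<Sum>S\<in>{S. S \<subseteq> Q \<and> 2 \<le> card S}. \<Sum>L0\<in>Pow (Q - S). F S (S \<union> L0))"
proof -
  let ?M = "{S. S \<subseteq> Q \<and> 2 \<le> card S}"
  have fM: "finite ?M" by (rule finite_subset[of _ "Pow Q"]) (auto simp: Q)
  have "(\<Sum>L\<in>Pow Q. \<Sum>S\<in>{S. S \<subseteq> L \<and> 2 \<le> card S}. F S L)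
      = (\<Sum>L\<in>Pow Q. \<Sum>S\<in>{S \<in> ?M. S \<subseteq> L}. F S L)"
    by (intro sum.cong refl) auto
  also have "\<dots> = (\<Sum>S\<in>?M. \<Sum>L\<in>{L \<in> Pow Q. S \<subseteq> L}. F S L)"
    using sum.swap_restrict[of "Pow Q" ?M "\<lambda>L S. F S L" "\<lambda>L S. S \<subseteq> L"] Q fM by simp
  also have "\<dots> = (\<Sum>S\<in>?M. \<Sum>L0\<in>Pow (Q - S). F S (S \<union> L0))"
  proof (rule sum.cong[OF refl])
    fix S assume S: "S \<in> ?M"
    have e: "{L \<in> Pow Q. S \<subseteq> L} = (\<lambda>L0. S \<union> L0) ` Pow (Q - S)" using S by auto
    have inj: "inj_on (\<lambda>L0. S \<union> L0) (Pow (Q - S))" unfolding inj_on_def by auto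
    show "(\<Sum>L\<in>{L \<in> Pow Q. S \<subseteq> L}. F S L) = (\<Sum>L0\<in>Pow (Q - S). F S (S \<union> L0))"
      unfolding e using inj by (simp add: sum.reindex)
  qed
  finally show ?thesis .
qed

lemma sum_Pow_sum_disjoint_subsets_swap:
  fixes F :: "'a set \<Rightarrow> 'a set \<Rightarrow> real"
  assumes Q: "finite Q"
  shows "(\<Sum>L\<in>Pow Q. \<Sum>S\<in>{S. S \<subseteq> Q - L \<and> 2 \<le> card S}. F S L)
       = (\<Sum>S\<in>{S. S \<subseteq> Q \<and> 2 \<le> card S}. \<Sum>L\<in>Pow (Q - S). F S L)"
proof -
  let ?M = "{S. S \<subseteq> Q \<and> 2 \<le> card S}"
  have fM: "finite ?M" by (rule finite_subset[of _ "Pow Q"]) (auto simp: Q)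
  have "(\<Sum>L\<in>Pow Q. \<Sum>S\<in>{S. S \<subseteq> Q - L \<and> 2 \<le> card S}. F S L)
      = (\<Sum>L\<in>Pow Q. \<Sum>S\<in>{S \<in> ?M. S \<inter> L = {}}. F S L)"
    by (intro sum.cong refl) auto
  also have "\<dots> = (\<Sum>S\<in>?M. \<Sum>L\<in>{L \<in> Pow Q. S \<inter> L = {}}. F S L)"
    using sum.swap_restrict[of "Pow Q" ?M "\<lambda>L S. F S L" "\<lambda>L S. S \<inter> L = {}"] Q fM by simp
  also have "\<dots> = (\<Sum>S\<in>?M. \<Sum>L\<in>Pow (Q - S). F S L)"
    by (intro sum.cong refl) auto
  finally show ?thesis .
qed

lemma total_rate_eq_card: "finite P \<Longrightarrow> 2 \<le> card P \<Longrightarrow> total_rate P = real (card P) - 1"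
  unfolding total_rate_def mergers_def
  by (subst sum_subsets_card_ge2[where \<phi>="bs_rate (card P)"]) (auto simp: sum_binomial_bs_rate)

lemma clade_prob_formula_singleton: "clade_prob_formula i k {{i}} = 0"
  unfolding clade_prob_formula_def by (simp add: absorb_prob_def)

lemma sum_Pow_absorb_prob_rec:
  fixes h :: "'a set \<Rightarrow> real"
  assumes fQ: "finite Q" and Q: "Q \<noteq> {}"
  shows "(\<Sum>L\<in>Pow Q. absorb_prob (card Q + 1) (card L) * h L)
     = (\<Sum>L\<in>Pow Q. (if L \<noteq> {} then bs_rate (card Q + 1) (card L + 1) else 0) * h L) / real (card Q)
     + (\<Sum>S\<in>{S. S \<subseteq> Q \<and> 2 \<le> card S}. bs_rate (card Q + 1) (card S) / real (card Q) *
          ((\<Sum>L\<in>Pow (Q - S). absorb_prob (card Q + 2 - card S) (card L) * h L)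
         + (\<Sum>L\<in>Pow (Q - S). absorb_prob (card Q + 2 - card S) (card L + 1) * h (S \<union> L))))"
proof -
  define N where "N = card Q"
  have N: "real N \<noteq> 0" using fQ Q unfolding N_def by simp
  define r where "r S = bs_rate (N + 1) (card S)" for S :: "'a set"
  define M2 where "M2 = {S. S \<subseteq> Q \<and> 2 \<le> card S}"
  define A where "A = (\<Sum>L\<in>Pow Q. (if L \<noteq> {} then bs_rate (N + 1) (card L + 1) else 0) * h L)"
  define G0 where "G0 S = (\<Sum>L\<in>Pow (Q - S). absorb_prob (N + 2 - card S) (card L) * h L)" for S
  define G1 where "G1 S = (\<Sum>L\<in>Pow (Q - S). absorb_prob (N + 2 - card S) (card L + 1) * h (S \<union> L))" for S
  have step: "absorb_prob (N + 1) (card L) * h L * real N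
      = (if L \<noteq> {} then bs_rate (N + 1) (card L + 1) else 0) * h L
      + (\<Sum>S\<in>{S. S \<subseteq> L \<and> 2 \<le> card S}. r S * (absorb_prob (N + 2 - card S) (card L + 1 - card S) * h L))
      + (\<Sum>S\<in>{S. S \<subseteq> Q - L \<and> 2 \<le> card S}. r S * (absorb_prob (N + 2 - card S) (card L) * h L))"
    if "L \<in> Pow Q" for L
  proof -
    have "absorb_prob (N + 1) (card L) * real N
      = (if L \<noteq> {} then bs_rate (N + 1) (card L + 1) else 0)
      + (\<Sum>S\<in>{S. S \<subseteq> L \<and> 2 \<le> card S}. r S * absorb_prob (N + 2 - card S) (card L + 1 - card S))
      + (\<Sum>S\<in>{S. S \<subseteq> Q - L \<and> 2 \<le> card S}. r S * absorb_prob (N + 2 - card S) (card L))"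
      using absorb_prob_rec_subsets[OF fQ, of L] that unfolding N_def r_def by (simp add: mult.commute)
    then have "absorb_prob (N + 1) (card L) * real N * h L
      = ((if L \<noteq> {} then bs_rate (N + 1) (card L + 1) else 0)
      + (\<Sum>S\<in>{S. S \<subseteq> L \<and> 2 \<le> card S}. r S * absorb_prob (N + 2 - card S) (card L + 1 - card S))
      + (\<Sum>S\<in>{S. S \<subseteq> Q - L \<and> 2 \<le> card S}. r S * absorb_prob (N + 2 - card S) (card L))) * h L"
      by simp
    then show ?thesis
      by (simp only: distrib_right sum_distrib_right mult.assoc mult.commute[of "real N" "h L"])
  qed
  have "(\<Sum>L\<in>Pow Q. absorb_prob (N + 1) (card L) * h L) * real N
      = (\<Sum>L\<in>Pow Q. absorb_prob (N + 1) (card L) * h L * real N)"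
    by (simp add: sum_distrib_right)
  also have "\<dots> = A
      + (\<Sum>L\<in>Pow Q. \<Sum>S\<in>{S. S \<subseteq> L \<and> 2 \<le> card S}. r S * (absorb_prob (N + 2 - card S) (card L + 1 - card S) * h L))
      + (\<Sum>L\<in>Pow Q. \<Sum>S\<in>{S. S \<subseteq> Q - L \<and> 2 \<le> card S}. r S * (absorb_prob (N + 2 - card S) (card L) * h L))"
    unfolding A_def by (simp only: sum.distrib[symmetric]) (rule sum.cong[OF refl step])
  also have "(\<Sum>L\<in>Pow Q. \<Sum>S\<in>{S. S \<subseteq> L \<and> 2 \<le> card S}. r S * (absorb_prob (N + 2 - card S) (card L + 1 - card S) * h L))
      = (\<Sum>S\<in>M2. r S * G1 S)"
  proof -
    have card_Un: "card (S \<union> L) = card S + card L" if "S \<in> M2" "L \<in> Pow (Q - S)" for S L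
      using that fQ unfolding M2_def by (intro card_Un_disjoint) (auto intro: finite_subset)
    show ?thesis
      unfolding sum_Pow_sum_subsets_swap[OF fQ] M2_def[symmetric] G1_def sum_distrib_left
      by (intro sum.cong refl) (simp add: card_Un)
  qed
  also have "(\<Sum>L\<in>Pow Q. \<Sum>S\<in>{S. S \<subseteq> Q - L \<and> 2 \<le> card S}. r S * (absorb_prob (N + 2 - card S) (card L) * h L))
      = (\<Sum>S\<in>M2. r S * G0 S)"
    unfolding sum_Pow_sum_disjoint_subsets_swap[OF fQ] M2_def[symmetric] G0_def sum_distrib_left ..
  finally have total: "(\<Sum>L\<in>Pow Q. absorb_prob (N + 1) (card L) * h L) * real N
      = A + (\<Sum>S\<in>M2. r S * G1 S) + (\<Sum>S\<in>M2. r S * G0 S)" .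
  have "(\<Sum>L\<in>Pow Q. absorb_prob (N + 1) (card L) * h L)
      = (A + ((\<Sum>S\<in>M2. r S * G1 S) + (\<Sum>S\<in>M2. r S * G0 S))) / real N"
    using total N by (simp add: eq_divide_eq add.assoc)
  also have "\<dots> = A / real N + (\<Sum>S\<in>M2. r S / real N * (G0 S + G1 S))"
    by (simp add: add_divide_distrib sum_divide_distrib sum.distrib algebra_simps)
  finally show ?thesis
    unfolding N_def A_def M2_def r_def G0_def G1_def .
qed

lemma mergers_containing:
  assumes "finite P" "{i} \<in> P"
  shows "{S \<in> mergers P. {i} \<in> S} = insert {i} ` {L \<in> Pow (P - {{i}}). L \<noteq> {}}"
proof (intro equalityI subsetI)
  fix S assume "S \<in> {S \<in> mergers P. {i} \<in> S}"
  then have S: "S \<subseteq> P" "2 \<le> card S" "{i} \<in> S" unfolding mergers_def by auto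
  then have "S \<noteq> {{i}}" by auto
  then show "S \<in> insert {i} ` {L \<in> Pow (P - {{i}}). L \<noteq> {}}"
    using S by (intro image_eqI[of _ _ "S - {{i}}"]) auto
next
  fix S assume "S \<in> insert {i} ` {L \<in> Pow (P - {{i}}). L \<noteq> {}}"
  then obtain L where L: "L \<subseteq> P - {{i}}" "L \<noteq> {}" "S = insert {i} L" by auto
  have "finite L" "{i} \<notin> L" using L assms(1) finite_subset by auto
  then have "card S = card L + 1" "card L \<ge> 1"
    using L by (auto simp: Suc_leI card_gt_0_iff)
  then show "S \<in> {S \<in> mergers P. {i} \<in> S}" unfolding mergers_def using L assms(2) by auto
qed

lemma sum_mergers_containing:
  fixes g :: "nat \<Rightarrow> real"
  assumes fP: "finite P" and iP: "{i} \<in> P"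
  shows "(\<Sum>S\<in>{S \<in> mergers P. {i} \<in> S}. g (card S) * (if card (\<Union>S) = k then 1 else 0))
       = (\<Sum>L\<in>Pow (P - {{i}}). (if L \<noteq> {} then g (card L + 1) else 0) * clade_size_ind i k L)"
proof -
  have inj: "inj_on (insert {i}) {L \<in> Pow (P - {{i}}). L \<noteq> {}}"
    unfolding inj_on_def by (metis (no_types, lifting) Diff_iff Diff_insert_absorb PowD insertI1 mem_Collect_eq subsetD)
  have card: "card (insert {i} L) = card L + 1" if "L \<in> Pow (P - {{i}})" for L
    using that fP by (subst card_insert_disjoint) (auto intro: finite_subset)
  have "(\<Sum>S\<in>{S \<in> mergers P. {i} \<in> S}. g (card S) * (if card (\<Union>S) = k then 1 else 0))
      = (\<Sum>L\<in>{L \<in> Pow (P - {{i}}). L \<noteq> {}}. g (card L + 1) * clade_size_ind i k L)"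
    unfolding mergers_containing[OF fP iP] using inj
    by (simp add: sum.reindex card clade_size_ind_def)
  also have "\<dots> = (\<Sum>L\<in>Pow (P - {{i}}). (if L \<noteq> {} then g (card L + 1) else 0) * clade_size_ind i k L)"
    using fP by (simp add: sum.inter_filter[symmetric] if_distrib if_distribR cong: if_cong)
  finally show ?thesis .
qed

lemma clade_prob_formula_merge:
  assumes g: "clade_state i P" and S: "S \<subseteq> P - {{i}}" "2 \<le> card S"
  shows "clade_prob_formula i k ((P - S) \<union> {\<Union>S})
       = (\<Sum>L\<in>Pow (P - {{i}} - S). absorb_prob (card P + 1 - card S) (card L) * clade_size_ind i k L)
       + (\<Sum>L\<in>Pow (P - {{i}} - S). absorb_prob (card P + 1 - card S) (card L + 1) * clade_size_ind i k (S \<union> L))"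
proof -
  have fP: "finite P" and iP: "{i} \<in> P" using g unfolding clade_state_def by auto
  have SP: "S \<subseteq> P" using S(1) by blast
  have notin_P: "\<Union>S \<notin> P" by (rule Union_merger_notin[OF g SP S(2)])
  define R where "R = P - {{i}} - S"
  have fR: "finite R" using fP unfolding R_def by simp
  have "\<Union>S \<noteq> {i}" using notin_P iP by metis
  then have blocks: "(P - S) \<union> {\<Union>S} - {{i}} = insert (\<Union>S) R"
    unfolding R_def by (simp add: insert_Diff_if Diff_insert2[symmetric] Diff_insert[symmetric])
  have card: "card ((P - S) \<union> {\<Union>S}) = card P + 1 - card S"
    by (rule card_merge[OF fP SP notin_P])
  have new: "\<Union>S \<notin> R" using notin_P unfolding R_def by blast
  have "clade_prob_formula i k ((P - S) \<union> {\<Union>S})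
      = (\<Sum>L\<in>Pow (insert (\<Union>S) R). absorb_prob (card P + 1 - card S) (card L) * clade_size_ind i k L)"
    unfolding clade_prob_formula_def blocks card ..
  also have "\<dots> = (\<Sum>L\<in>Pow R. absorb_prob (card P + 1 - card S) (card L) * clade_size_ind i k L)
      + (\<Sum>L\<in>Pow R. absorb_prob (card P + 1 - card S) (card (insert (\<Union>S) L)) * clade_size_ind i k (insert (\<Union>S) L))"
    by (rule sum_Pow_insert[OF fR new])
  also have "(\<Sum>L\<in>Pow R. absorb_prob (card P + 1 - card S) (card (insert (\<Union>S) L)) * clade_size_ind i k (insert (\<Union>S) L))
      = (\<Sum>L\<in>Pow R. absorb_prob (card P + 1 - card S) (card L + 1) * clade_size_ind i k (S \<union> L))"
  proof (rule sum.cong[OF refl])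
    fix L assume L: "L \<in> Pow R"
    have "card (insert (\<Union>S) L) = card L + 1" using L new fR by (subst card_insert_disjoint) (auto intro: finite_subset)
    moreover have "\<Union>(insert {i} (insert (\<Union>S) L)) = \<Union>(insert {i} (S \<union> L))" by auto
    ultimately show "absorb_prob (card P + 1 - card S) (card (insert (\<Union>S) L)) * clade_size_ind i k (insert (\<Union>S) L)
        = absorb_prob (card P + 1 - card S) (card L + 1) * clade_size_ind i k (S \<union> L)"
      unfolding clade_size_ind_def by simp
  qed
  finally show ?thesis unfolding R_def .
qed

lemma clade_prob_formula_rec:
  assumes g: "clade_state i P" and P2: "2 \<le> card P"
  shows "clade_prob_formula i k P = (\<Sum>S\<in>mergers P. bs_rate (card P) (card S) / total_rate P *
           (if {i} \<in> S then (if card (\<Union>S) = k then 1 else 0)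
            else clade_prob_formula i k ((P - S) \<union> {\<Union>S})))"
proof -
  have fP: "finite P" and iP: "{i} \<in> P" using g unfolding clade_state_def by auto
  define Q where "Q = P - {{i}}"
  have fQ: "finite Q" unfolding Q_def using fP by simp
  have "card P > 0" using fP iP card_gt_0_iff by blast
  then have cP: "card P = card Q + 1" unfolding Q_def using iP by (simp add: card_Diff_singleton)
  then have Q: "Q \<noteq> {}" using P2 by auto
  have tr: "total_rate P = real (card Q)" using P2 cP fP by (subst total_rate_eq_card) auto
  define c where "c S = bs_rate (card P) (card S) / total_rate P" for S :: "nat set set"
  have fM: "finite (mergers P)" unfolding mergers_def by (rule finite_subset[of _ "Pow P"]) (auto simp: fP)
  have with_i: "mergers P \<inter> {S. {i} \<in> S} = {S \<in> mergers P. {i} \<in> S}" by auto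
  have others: "mergers P \<inter> - {S. {i} \<in> S} = {S. S \<subseteq> Q \<and> 2 \<le> card S}"
    unfolding mergers_def Q_def by auto
  have "(\<Sum>S\<in>mergers P. c S * (if {i} \<in> S then (if card (\<Union>S) = k then 1 else 0)
            else clade_prob_formula i k ((P - S) \<union> {\<Union>S})))
      = (\<Sum>S\<in>{S \<in> mergers P. {i} \<in> S}. c S * (if card (\<Union>S) = k then 1 else 0))
      + (\<Sum>S\<in>{S. S \<subseteq> Q \<and> 2 \<le> card S}. c S * clade_prob_formula i k ((P - S) \<union> {\<Union>S}))"
    unfolding with_i[symmetric] others[symmetric] sum.If_cases[OF fM, symmetric]
    by (intro sum.cong refl) simp
  also have "(\<Sum>S\<in>{S \<in> mergers P. {i} \<in> S}. c S * (if card (\<Union>S) = k then 1 else 0))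
      = (\<Sum>L\<in>Pow Q. (if L \<noteq> {} then bs_rate (card Q + 1) (card L + 1) else 0) * clade_size_ind i k L) / real (card Q)"
    unfolding c_def tr using sum_mergers_containing[OF fP iP, of "\<lambda>s. bs_rate (card P) s / real (card Q)" k]
    by (simp add: Q_def cP sum_divide_distrib if_distrib if_distribR cong: if_cong)
  also have "(\<Sum>S\<in>{S. S \<subseteq> Q \<and> 2 \<le> card S}. c S * clade_prob_formula i k ((P - S) \<union> {\<Union>S}))
      = (\<Sum>S\<in>{S. S \<subseteq> Q \<and> 2 \<le> card S}. bs_rate (card Q + 1) (card S) / real (card Q) *
          ((\<Sum>L\<in>Pow (Q - S). absorb_prob (card Q + 2 - card S) (card L) * clade_size_ind i k L)
         + (\<Sum>L\<in>Pow (Q - S). absorb_prob (card Q + 2 - card S) (card L + 1) * clade_size_ind i k (S \<union> L))))"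
    unfolding c_def tr
    by (intro sum.cong refl) (simp add: clade_prob_formula_merge[OF g] cP Q_def del: Un_insert_right)
  finally have rhs: "(\<Sum>S\<in>mergers P. c S * (if {i} \<in> S then (if card (\<Union>S) = k then 1 else 0)
            else clade_prob_formula i k ((P - S) \<union> {\<Union>S})))
      = (\<Sum>L\<in>Pow Q. (if L \<noteq> {} then bs_rate (card Q + 1) (card L + 1) else 0) * clade_size_ind i k L) / real (card Q)
      + (\<Sum>S\<in>{S. S \<subseteq> Q \<and> 2 \<le> card S}. bs_rate (card Q + 1) (card S) / real (card Q) *
          ((\<Sum>L\<in>Pow (Q - S). absorb_prob (card Q + 2 - card S) (card L) * clade_size_ind i k L)
         + (\<Sum>L\<in>Pow (Q - S). absorb_prob (card Q + 2 - card S) (card L + 1) * clade_size_ind i k (S \<union> L))))" .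
  have "clade_prob_formula i k P = (\<Sum>L\<in>Pow Q. absorb_prob (card Q + 1) (card L) * clade_size_ind i k L)"
    unfolding clade_prob_formula_def Q_def[symmetric] cP ..
  with sum_Pow_absorb_prob_rec[OF fQ Q, of "clade_size_ind i k"] rhs show ?thesis
    unfolding c_def by (simp only:)
qed

lemma clade_prob_eq_formula:
  "clade_state i P \<Longrightarrow> card P \<le> Suc f \<Longrightarrow> clade_prob f i P k = clade_prob_formula i k P"
proof (induction f arbitrary: P)
  case 0
  then have "P = {{i}}" using card_le_Suc0_iff_eq[of P] unfolding clade_state_def by auto
  then show ?case by (simp add: clade_prob_formula_singleton)
next
  case (Suc f)
  have fP: "finite P" and iP: "{i} \<in> P" using Suc.prems(1) unfolding clade_state_def by auto
  show ?case
  proof (cases "card P \<le> 1")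
    case True
    then have "P = {{i}}" using card_le_Suc0_iff_eq[OF fP] iP by auto
    moreover have "mergers {{i}} = {}" unfolding mergers_def subset_singleton_iff by auto
    ultimately show ?thesis by (simp add: clade_prob_formula_singleton)
  next
    case False
    then have P2: "2 \<le> card P" by simp
    have IH: "clade_prob f i ((P - S) \<union> {\<Union>S}) k = clade_prob_formula i k ((P - S) \<union> {\<Union>S})"
      if "S \<in> mergers P" "{i} \<notin> S" for S
    proof -
      have S: "S \<subseteq> P - {{i}}" "2 \<le> card S" using that unfolding mergers_def by auto
      have SP: "S \<subseteq> P" using S(1) by blast
      have "card ((P - S) \<union> {\<Union>S}) = card P + 1 - card S"
        by (rule card_merge[OF fP SP Union_merger_notin[OF Suc.prems(1) SP S(2)]])
      then have "card ((P - S) \<union> {\<Union>S}) \<le> Suc f" using S(2) Suc.prems(2) by linarith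
      then show ?thesis using clade_state_merge[OF Suc.prems(1) S] by (intro Suc.IH)
    qed
    show ?thesis
      unfolding clade_prob.simps clade_prob_formula_rec[OF Suc.prems(1) P2] using IH
      by (intro sum.cong refl) auto
  qed
qed

lemma card_Union_insert_singletons:
  assumes L: "L \<subseteq> (\<lambda>x. {x}) ` {1..(n::nat)} - {{i}}"
  shows "card (\<Union>(insert {i} L)) = card L + 1"
proof -
  have fL: "finite L" using L by (rule finite_subset) simp
  have sing: "\<forall>B\<in>L. \<exists>x. B = {x}" using L by auto
  have "card (\<Union>L) = sum card L"
    using fL sing by (intro card_Union_disjoint) (auto simp: pairwise_def disjnt_def)
  also have "\<dots> = (\<Sum>B\<in>L. 1)" using sing by (intro sum.cong refl) auto
  also have "\<dots> = card L" by simp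
  finally have c: "card (\<Union>L) = card L" .
  have "i \<notin> \<Union>L" using L by auto
  moreover have "finite (\<Union>L)" using fL sing by auto
  ultimately show ?thesis using c by simp
qed

lemma clade_prob_singletons:
  assumes n: "n \<ge> 2" and i: "i \<in> {1..n}" and j: "1 \<le> j" "j \<le> n - 1"
  shows "clade_prob n i ((\<lambda>x. {x}) ` {1..n}) (j + 1) = mean_inv_Suc_tables (n - 1 - j) / real j"
proof -
  define P0 where "P0 = (\<lambda>x. {x}) ` {1..n}"
  define Q0 where "Q0 = P0 - {{i}}"
  have g: "clade_state i P0" unfolding clade_state_def P0_def using i by auto
  have cP0: "card P0 = n" unfolding P0_def by (subst card_image) (auto simp: inj_on_def)
  have fQ0: "finite Q0" unfolding Q0_def P0_def by simp
  have cQ0: "card Q0 = n - 1" unfolding Q0_def using cP0 i by (simp add: P0_def card_Diff_singleton)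
  have "clade_prob n i P0 (j + 1) = clade_prob_formula i (j + 1) P0"
    using clade_prob_eq_formula[OF g] cP0 by simp
  also have "\<dots> = (\<Sum>L\<in>Pow Q0. if card L = j then absorb_prob n j else 0)"
    unfolding clade_prob_formula_def cP0 Q0_def
  proof (rule sum.cong[OF refl])
    fix L assume "L \<in> Pow (P0 - {{i}})"
    then have "card (\<Union>(insert {i} L)) = card L + 1" unfolding P0_def by (intro card_Union_insert_singletons) auto
    then show "absorb_prob n (card L) * clade_size_ind i (j + 1) L = (if card L = j then absorb_prob n j else 0)" unfolding clade_size_ind_def by simp
  qed
  also have "\<dots> = real (card {L. L \<subseteq> Q0 \<and> card L = j}) * absorb_prob n j"
    using fQ0 by (simp add: sum.If_cases Int_def)
  also have "\<dots> = real ((n - 1) choose j) * absorb_prob n j" using n_subsets[OF fQ0] cQ0 by simp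
  also have "\<dots> = mean_inv_Suc_tables (n - 1 - j) / real j"
  proof -
    have a: "(fact j :: real) * fact (n - 1 - j) * real ((n - 1) choose j) = fact (n - 1)"
      using binomial_fact_lemma[OF j(2)] by (metis of_nat_fact of_nat_mult)
    have fj: "(fact j :: real) = real j * fact (j - 1)" using j by (simp add: fact_reduce)
    have jn: "j \<noteq> 0" using j by simp
    show ?thesis unfolding absorb_prob_def using jn a fj
      by (simp add: field_simps)
  qed
  finally show ?thesis unfolding P0_def .
qed

lemma minclade_prob_eq:
  assumes n: "n \<ge> 2" and j: "1 \<le> j" "j \<le> n - 1"
  shows "minclade_prob n (j + 1) = mean_inv_Suc_tables (n - 1 - j) / real j"
  unfolding minclade_prob_def using clade_prob_singletons[OF n _ j] n by simp

section \<open>Bernoulli and composition representations\<close>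

lemma pmf_expectation_bind_finite:
  fixes h :: "'b \<Rightarrow> real"
  assumes "finite (set_pmf p)" "\<And>x. x \<in> set_pmf p \<Longrightarrow> finite (set_pmf (f x))"
  shows "measure_pmf.expectation (p \<bind> f) h = measure_pmf.expectation p (\<lambda>x. measure_pmf.expectation (f x) h)"
  using assms by (subst pmf_expectation_bind[of "set_pmf p"]) (auto simp: integral_measure_pmf[of "set_pmf p"] mult.commute)

lemma pmf_expectation_cong:
  fixes f g :: "'a \<Rightarrow> real"
  assumes "\<And>x. x \<in> set_pmf p \<Longrightarrow> f x = g x"
  shows "measure_pmf.expectation p f = measure_pmf.expectation p g"
  using assms by (intro integral_cong_AE) (auto simp: AE_measure_pmf_iff)

lemma sum_tables_prob_Suc: "(\<Sum>k=0..Suc m. tables_prob (Suc m) k * g k) = (\<Sum>k=0..m. tables_prob m k * ((g (Suc k) + real m * g k) / real (Suc m)))"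
proof -
  have "(\<Sum>k=0..Suc m. tables_prob (Suc m) k * g k) = (\<Sum>k=0..Suc m. (real m * tables_prob m k * g k + tables_prob_shift m k * g k) / real (Suc m))"
    by (intro sum.cong refl) (simp add: tables_prob_shift_def field_simps)
  also have "\<dots> = ((\<Sum>k=0..Suc m. real m * tables_prob m k * g k) + (\<Sum>k=0..Suc m. tables_prob_shift m k * g k)) / real (Suc m)"
    by (simp only: add_divide_distrib sum.distrib sum_divide_distrib)
  also have "(\<Sum>k=0..Suc m. real m * tables_prob m k * g k) = (\<Sum>k=0..m. real m * tables_prob m k * g k)"
    by (simp add: tables_prob_eq_0)
  also have "(\<Sum>k=0..Suc m. tables_prob_shift m k * g k) = (\<Sum>k=0..m. tables_prob m k * g (Suc k))"
    by (subst sum.atLeast0_atMost_Suc_shift) (simp add: tables_prob_shift_def)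
  finally show ?thesis
    by (simp add: sum_divide_distrib[symmetric] sum.distrib[symmetric] field_simps)
qed

lemma finite_set_pmf_bern_seq: "finite (set_pmf (bern_seq m))"
  unfolding bern_seq_def
  by (rule finite_subset[OF set_Pi_pmf_subset']) (auto intro!: finite_PiE_dflt)

lemma expectation_bern_seq_sum:
  fixes g :: "real \<Rightarrow> real"
  shows "measure_pmf.expectation (bern_seq m) (\<lambda>b. g (\<Sum>i=1..m. if b i then 1 else 0))
       = (\<Sum>k=0..m. tables_prob m k * g (real k))"
proof (induction m arbitrary: g)
  case 0
  show ?case by (simp add: bern_seq_def)
next
  case (Suc m)
  let ?p = "\<lambda>i. bernoulli_pmf (1 / real i)"
  have "bern_seq (Suc m) = bernoulli_pmf (1 / real (Suc m)) \<bind> (\<lambda>y. bern_seq m \<bind> (\<lambda>f. return_pmf (f(Suc m := y))))"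
  proof -
    have e: "{1..Suc m} = insert (Suc m) {1..m}" by auto
    show ?thesis unfolding bern_seq_def e by (subst Pi_pmf_insert') auto
  qed
  then have "measure_pmf.expectation (bern_seq (Suc m)) (\<lambda>b. g (\<Sum>i=1..Suc m. if b i then 1 else 0))
     = measure_pmf.expectation (bernoulli_pmf (1 / real (Suc m)))
         (\<lambda>y. measure_pmf.expectation (bern_seq m) (\<lambda>f. g (\<Sum>i=1..Suc m. if (f(Suc m := y)) i then 1 else 0)))"
    using finite_set_pmf_bern_seq by (simp add: pmf_expectation_bind_finite)
  also have "\<dots> = measure_pmf.expectation (bernoulli_pmf (1 / real (Suc m)))
         (\<lambda>y. measure_pmf.expectation (bern_seq m) (\<lambda>f. g ((\<Sum>i=1..m. if f i then 1 else 0) + (if y then 1 else 0))))"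
    by (simp add: sum.cl_ivl_Suc)
  also have "\<dots> = (\<Sum>k=0..m. tables_prob m k * g (real k + 1)) * (1 / real (Suc m)) + (\<Sum>k=0..m. tables_prob m k * g (real k)) * (1 - 1 / real (Suc m))"
    using Suc.IH[of "\<lambda>x. g (x + 1)"] Suc.IH[of g] by simp
  also have "\<dots> = (\<Sum>k=0..m. tables_prob m k * ((g (real (Suc k)) + real m * g (real k)) / real (Suc m)))"
  proof -
    have "(\<Sum>k=0..m. tables_prob m k * ((g (real (Suc k)) + real m * g (real k)) / real (Suc m)))
        = (\<Sum>k=0..m. tables_prob m k * g (real k + 1) * (1 / real (Suc m)) + tables_prob m k * g (real k) * (real m / real (Suc m)))"
      by (intro sum.cong refl) (simp add: add_divide_distrib algebra_simps)
    moreover have "1 - 1 / real (Suc m) = real m / real (Suc m)" by (simp add: field_simps)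
    ultimately show ?thesis by (simp add: sum.distrib sum_distrib_right sum_divide_distrib)
  qed
  also have "\<dots> = (\<Sum>k=0..Suc m. tables_prob (Suc m) k * g (real k))"
    by (rule sum_tables_prob_Suc[symmetric])
  finally show ?case .
qed

lemma finite_Delta_set: "finite (Delta_set m k)"
  unfolding Delta_set_def by (rule finite_subset[of _ "{1..k} \<rightarrow>\<^sub>E {1..m}"]) (auto intro: finite_PiE)

lemma Delta_set_0: "Delta_set m 0 = (if m = 0 then {\<lambda>_. undefined} else {})"
  unfolding Delta_set_def by auto

lemma sum_Delta_set_eq_tables_prob: "(\<Sum>v\<in>Delta_set m k. 1 / (\<Prod>i=1..k. real (v i))) = fact k * tables_prob m k"
proof (induction k arbitrary: m)
  case 0
  show ?case by (simp add: Delta_set_0 tables_prob_0)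
next
  case (Suc k)
  let ?S = "Sigma {1..m} (\<lambda>r. Delta_set (m - r) k)"
  have bij: "(\<Sum>v\<in>Delta_set m (Suc k). 1 / (\<Prod>i=1..Suc k. real (v i)))
      = (\<Sum>p\<in>?S. 1 / ((\<Prod>i=1..k. real (snd p i)) * real (fst p)))"
  proof (rule sum.reindex_bij_witness[where j = "\<lambda>v. (v (Suc k), restrict v {1..k})" and i = "\<lambda>p. (snd p)(Suc k := fst p)"])
    fix v assume v: "v \<in> Delta_set m (Suc k)"
    then have vP: "v \<in> {1..Suc k} \<rightarrow>\<^sub>E {1..m}" and vs: "(\<Sum>i=1..Suc k. v i) = m" unfolding Delta_set_def by auto
    show "(snd (v (Suc k), restrict v {1..k}))(Suc k := fst (v (Suc k), restrict v {1..k})) = v"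
      using vP by (auto simp: restrict_def PiE_def extensional_def fun_eq_iff)
    have s2: "(\<Sum>i=1..k. v i) = m - v (Suc k)" using vs by (simp add: sum.cl_ivl_Suc)
    have le: "\<And>i. i \<in> {1..k} \<Longrightarrow> v i \<le> m - v (Suc k)"
      unfolding s2[symmetric] by (rule member_le_sum) auto
    have r: "v (Suc k) \<in> {1..m}" using vP by auto
    show "(v (Suc k), restrict v {1..k}) \<in> ?S"
      using r vP le s2 unfolding Delta_set_def by (auto simp: PiE_def Pi_def)
    have "(\<Prod>i=1..Suc k. real (v i)) = (\<Prod>i=1..k. real (v i)) * real (v (Suc k))"
      by (simp add: prod.cl_ivl_Suc)
    then show "1 / ((\<Prod>i=1..k. real (snd (v (Suc k), restrict v {1..k}) i)) * real (fst (v (Suc k), restrict v {1..k})))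
        = 1 / (\<Prod>i=1..Suc k. real (v i))"
      by simp
  next
    fix p assume p: "p \<in> ?S"
    obtain r w where pw: "p = (r, w)" by (cases p)
    have r: "r \<in> {1..m}" and w: "w \<in> {1..k} \<rightarrow>\<^sub>E {1..m - r}" and ws: "(\<Sum>i=1..k. w i) = m - r"
      using p unfolding pw Delta_set_def by auto
    have ext: "restrict w {1..k} = w" using w by (simp add: PiE_def extensional_restrict)
    have "restrict (w(Suc k := r)) {1..k} = restrict w {1..k}" by (auto simp: restrict_def fun_eq_iff)
    then show "(((snd p)(Suc k := fst p)) (Suc k), restrict ((snd p)(Suc k := fst p)) {1..k}) = p"
      unfolding pw using ext by simp
    have "(\<Sum>i=1..Suc k. (w(Suc k := r)) i) = (\<Sum>i=1..k. w i) + r"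
      by (simp add: sum.cl_ivl_Suc)
    then have "(\<Sum>i=1..Suc k. (w(Suc k := r)) i) = m" using ws r by simp
    moreover have "w(Suc k := r) \<in> {1..Suc k} \<rightarrow>\<^sub>E {1..m}"
      using w r by (auto simp: PiE_def Pi_def extensional_def)
    ultimately show "(snd p)(Suc k := fst p) \<in> Delta_set m (Suc k)" unfolding pw Delta_set_def by simp
  qed
  also have "\<dots> = (\<Sum>r=1..m. \<Sum>w\<in>Delta_set (m - r) k. 1 / ((\<Prod>i=1..k. real (w i)) * real r))"
    by (subst sum.Sigma) (auto simp: finite_Delta_set split_def)
  also have "\<dots> = (\<Sum>r=1..m. fact k * tables_prob (m - r) k / real r)"
  proof (rule sum.cong[OF refl])
    fix r assume "r \<in> {1..m}"
    have "(\<Sum>w\<in>Delta_set (m - r) k. 1 / ((\<Prod>i=1..k. real (w i)) * real r))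
        = (\<Sum>w\<in>Delta_set (m - r) k. 1 / (\<Prod>i=1..k. real (w i))) / real r"
      by (simp add: sum_divide_distrib)
    then show "(\<Sum>w\<in>Delta_set (m - r) k. 1 / ((\<Prod>i=1..k. real (w i)) * real r)) = fact k * tables_prob (m - r) k / real r"
      using Suc.IH[of "m - r"] by simp
  qed
  also have "\<dots> = fact k * (\<Sum>r=1..m. tables_prob_shift (m - r) (Suc k) / real r)"
    by (simp add: sum_distrib_left tables_prob_shift_def)
  also have "\<dots> = fact k * (real (Suc k) * tables_prob m (Suc k))"
    using index_mult_tables_prob[of "Suc k" m] by simp
  also have "\<dots> = fact (Suc k) * tables_prob m (Suc k)" by simp
  finally show ?case .
qed

lemma mean_inv_Suc_tables_Delta_set:
  assumes m: "m \<ge> 1"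
  shows "mean_inv_Suc_tables m = (\<Sum>k=1..m. 1 / fact (k + 1) * (\<Sum>v\<in>Delta_set m k. 1 / (\<Prod>i=1..k. real (v i))))"
proof -
  have "mean_inv_Suc_tables m = (\<Sum>k=1..m. tables_prob m k / real (Suc k))"
    unfolding mean_inv_Suc_tables_def using m by (simp add: sum.atLeast_Suc_atMost tables_prob_0)
  also have "\<dots> = (\<Sum>k=1..m. 1 / fact (k + 1) * (\<Sum>v\<in>Delta_set m k. 1 / (\<Prod>i=1..k. real (v i))))"
  proof (rule sum.cong[OF refl])
    fix k
    show "tables_prob m k / real (Suc k) = 1 / fact (k + 1) * (\<Sum>v\<in>Delta_set m k. 1 / (\<Prod>i=1..k. real (v i)))"
    proof -
      have f: "(fact (k + 1) :: real) = real (Suc k) * fact k" by simp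
      show ?thesis unfolding sum_Delta_set_eq_tables_prob f by simp
    qed
  qed
  finally show ?thesis .
qed

section \<open>Tables of the Chinese restaurant process\<close>

lemma sit_left_eq_comp_transpose:
  assumes p: "\<sigma> permutes {1..m}" and c: "c \<in> {1..m}"
  shows "sit_left \<sigma> (Suc m) c = \<sigma> \<circ> Transposition.transpose (Suc m) (inv \<sigma> c)"
proof (rule ext)
  fix y
  let ?d = "inv \<sigma> c"
  have sd: "\<sigma> ?d = c" using permutes_inverses(1)[OF p] .
  have dm: "?d \<in> {1..m}" using c p by (metis permutes_in_image sd)
  have sx: "\<sigma> (Suc m) = Suc m" using p by (intro permutes_not_in) auto
  have inj: "\<And>z. \<sigma> z = c \<Longrightarrow> z = ?d" using p by (metis permutes_inverses(2))
  show "sit_left \<sigma> (Suc m) c y = (\<sigma> \<circ> Transposition.transpose (Suc m) ?d) y"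
  proof (cases "y = Suc m")
    case True then show ?thesis using sd dm by (simp add: sit_left_def)
  next
    case False
    note F = False
    show ?thesis
    proof (cases "y = ?d")
      case True then show ?thesis using F sd sx dm by (simp add: sit_left_def)
    next
      case False
      then have "\<sigma> y \<noteq> c" using inj by blast
      then show ?thesis using F False by (simp add: sit_left_def)
    qed
  qed
qed

lemma sit_left_permutes:
  assumes p: "\<sigma> permutes {1..m}" and c: "c \<in> {1..m}"
  shows "sit_left \<sigma> (Suc m) c permutes {1..Suc m}"
proof -
  have p': "\<sigma> permutes {1..Suc m}" using p by (rule permutes_subset) auto
  have dm: "inv \<sigma> c \<in> {1..m}" using permutes_in_image[OF permutes_inv[OF p]] c by blast
  have a1: "Suc m \<in> {1..Suc m}" "inv \<sigma> c \<in> {1..Suc m}" using dm by auto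
  have "Transposition.transpose (Suc m) (inv \<sigma> c) permutes {1..Suc m}"
    by (rule permutes_swap_id[OF a1])
  then have "\<sigma> \<circ> Transposition.transpose (Suc m) (inv \<sigma> c) permutes {1..Suc m}"
    by (rule permutes_compose[OF _ p'])
  then show ?thesis by (simp only: sit_left_eq_comp_transpose[OF p c])
qed

lemma set_pmf_crp_Suc: "set_pmf (crp (Suc m)) = (\<Union>\<sigma>\<in>set_pmf (crp m). \<Union>c\<in>{1..Suc m}. {if c = Suc m then \<sigma> else sit_left \<sigma> (Suc m) c})"
  by (simp add: set_bind_pmf)

lemma crp_permutes: "\<sigma> \<in> set_pmf (crp m) \<Longrightarrow> \<sigma> permutes {1..m}"
proof (induction m arbitrary: \<sigma>)
  case 0 then have "\<sigma> = id" by (simp add: id_def)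
  then show ?case by (simp only: permutes_id)
next
  case (Suc m)
  then obtain \<tau> c where t: "\<tau> \<in> set_pmf (crp m)" "c \<in> {1..Suc m}"
    and s: "\<sigma> = (if c = Suc m then \<tau> else sit_left \<tau> (Suc m) c)" unfolding set_pmf_crp_Suc by blast
  have pt: "\<tau> permutes {1..m}" using Suc.IH t by simp
  show ?case
  proof (cases "c = Suc m")
    case True then show ?thesis using s pt by (simp add: permutes_subset)
  next
    case False then show ?thesis using s pt t sit_left_permutes by auto
  qed
qed

lemma finite_set_pmf_crp: "finite (set_pmf (crp m))"
proof (induction m)
  case 0 then show ?case by simp
next
  case (Suc m) then show ?case unfolding set_pmf_crp_Suc by (intro finite_UN_I) auto
qed

context
  fixes \<sigma> :: "nat \<Rightarrow> nat" and m :: nat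
  assumes p: "\<sigma> permutes {1..m}"
begin

lemma crp_table_eq_orbit: "crp_table \<sigma> c = orbit \<sigma> c"
  unfolding crp_table_def orbit_altdef_permutation[OF permutes_imp_permutation[OF finite_atLeastAtMost p]] ..

lemma crp_table_self: "c \<in> crp_table \<sigma> c"
  unfolding crp_table_def by (auto intro: exI[of _ 0])

lemma crp_table_closed: "z \<in> crp_table \<sigma> c \<Longrightarrow> \<sigma> z \<in> crp_table \<sigma> c"
  unfolding crp_table_def
proof -
  assume "z \<in> {(\<sigma> ^^ k) c |k. True}"
  then obtain k where "z = (\<sigma> ^^ k) c" by auto
  then have "\<sigma> z = (\<sigma> ^^ Suc k) c" by simp
  then show "\<sigma> z \<in> {(\<sigma> ^^ k) c |k. True}" by blast
qed

lemma permutes_funpow_in: "c \<in> {1..m} \<Longrightarrow> (\<sigma> ^^ k) c \<in> {1..m}"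
proof (induction k)
  case 0 then show ?case by simp
next
  case (Suc k)
  have "(\<sigma> ^^ Suc k) c = \<sigma> ((\<sigma> ^^ k) c)" by simp
  then show ?case using permutes_in_image[OF p, of "(\<sigma> ^^ k) c"] Suc by simp
qed

lemma crp_table_subset: "c \<in> {1..m} \<Longrightarrow> crp_table \<sigma> c \<subseteq> {1..m}"
  unfolding crp_table_def using permutes_funpow_in by auto

lemma permutes_funpow_outside: "c \<notin> {1..m} \<Longrightarrow> (\<sigma> ^^ k) c = c"
  by (induction k) (auto simp: permutes_not_in[OF p])

lemma crp_table_outside: "c \<notin> {1..m} \<Longrightarrow> crp_table \<sigma> c = {c}"
  unfolding crp_table_def using permutes_funpow_outside by auto

lemma crp_table_eq: "y \<in> crp_table \<sigma> c \<Longrightarrow> crp_table \<sigma> y = crp_table \<sigma> c"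
  unfolding crp_table_eq_orbit
proof -
  assume y: "y \<in> orbit \<sigma> c"
  have cc: "c \<in> orbit \<sigma> c" by (rule permutation_self_in_orbit[OF permutes_imp_permutation[OF finite_atLeastAtMost p]])
  have cy: "c \<in> orbit \<sigma> y" by (rule orbit_swap[OF cc y])
  show "orbit \<sigma> y = orbit \<sigma> c"
    using orbit_trans[OF _ y] orbit_trans[OF _ cy] by blast
qed

lemma finite_crp_table: "finite (crp_table \<sigma> c)"
  by (cases "c \<in> {1..m}") (auto intro: finite_subset[OF crp_table_subset] simp: crp_table_outside)

lemma crp_tables_Suc: "crp_tables (Suc m) \<sigma> = insert {Suc m} (crp_tables m \<sigma>)"
proof -
  have "{1..Suc m} = insert (Suc m) {1..m}" by auto
  then show ?thesis unfolding crp_tables_def using crp_table_outside[of "Suc m"] by simp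
qed

lemma crp_tables_subset: "T \<in> crp_tables m \<sigma> \<Longrightarrow> T \<subseteq> {1..m}"
  unfolding crp_tables_def using crp_table_subset by blast

lemma card_crp_tables: "T \<in> crp_tables m \<sigma> \<Longrightarrow> card T \<in> {1..m}"
proof -
  assume T: "T \<in> crp_tables m \<sigma>"
  then obtain c where c: "c \<in> {1..m}" "T = crp_table \<sigma> c" unfolding crp_tables_def by auto
  have "card T \<le> m" using crp_tables_subset[OF T] card_mono[of "{1..m}" T] by simp
  moreover have "card T \<ge> 1" using c crp_table_self[of c] finite_crp_table[of c] by (metis One_nat_def Suc_leI card_gt_0_iff empty_iff)
  ultimately show ?thesis by simp
qed

end

context
  fixes \<sigma> :: "nat \<Rightarrow> nat" and m c :: nat
  assumes p: "\<sigma> permutes {1..m}" and c: "c \<in> {1..m}"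
begin

lemma sit_left_new: "sit_left \<sigma> (Suc m) c (Suc m) = c"
  unfolding sit_left_def by simp

lemma sit_left_old: "z \<in> {1..m} \<Longrightarrow> sit_left \<sigma> (Suc m) c z = (if \<sigma> z = c then Suc m else \<sigma> z)"
  unfolding sit_left_def by auto

lemma crp_table_sit_left_other:
  assumes y: "y \<in> {1..m}" "y \<notin> crp_table \<sigma> c"
  shows "crp_table (sit_left \<sigma> (Suc m) c) y = crp_table \<sigma> y"
proof -
  let ?O = "crp_table \<sigma> y"
  have eq: "\<And>z. z \<in> ?O \<Longrightarrow> (sit_left \<sigma> (Suc m) c) z = \<sigma> z"
  proof -
    fix z assume z: "z \<in> ?O"
    have zm: "z \<in> {1..m}" using crp_table_subset[OF p y(1)] z by auto
    have "\<sigma> z \<noteq> c"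
    proof
      assume "\<sigma> z = c"
      then have "c \<in> ?O" using crp_table_closed[OF p z] by simp
      then have "crp_table \<sigma> c = ?O" by (rule crp_table_eq[OF p])
      then show False using y crp_table_self[OF p, of y] by simp
    qed
    then show "(sit_left \<sigma> (Suc m) c) z = \<sigma> z" using sit_left_old[OF zm] by simp
  qed
  have "\<And>k. ((sit_left \<sigma> (Suc m) c) ^^ k) y = (\<sigma> ^^ k) y \<and> (\<sigma> ^^ k) y \<in> ?O"
  proof -
    fix k show "((sit_left \<sigma> (Suc m) c) ^^ k) y = (\<sigma> ^^ k) y \<and> (\<sigma> ^^ k) y \<in> ?O"
    proof (induction k)
      case 0 then show ?case using crp_table_self[OF p] by simp
    next
      case (Suc k)
      then show ?case using eq[of "(\<sigma> ^^ k) y"] crp_table_closed[OF p, of "(\<sigma> ^^ k) y" y] by simp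
    qed
  qed
  then show ?thesis unfolding crp_table_def by auto
qed

lemma permutation_sit_left: "permutation (sit_left \<sigma> (Suc m) c)"
  using sit_left_permutes[OF p c] by (rule permutes_imp_permutation[rotated]) simp

lemma orbit_sit_left_subset: "orbit (sit_left \<sigma> (Suc m) c) c \<subseteq> insert (Suc m) (crp_table \<sigma> c)"
proof
  fix z assume "z \<in> orbit (sit_left \<sigma> (Suc m) c) c"
  then show "z \<in> insert (Suc m) (crp_table \<sigma> c)"
  proof induction
    case base
    show ?case using sit_left_old[OF c] crp_table_closed[OF p crp_table_self[OF p, of c]] by auto
  next
    case (step y)
    show ?case
    proof (cases "y = Suc m")
      case True then show ?thesis using sit_left_new crp_table_self[OF p, of c] by simp
    next
      case False
      then have yT: "y \<in> crp_table \<sigma> c" using step by simp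
      then have ym: "y \<in> {1..m}" using crp_table_subset[OF p c] by auto
      show ?thesis using sit_left_old[OF ym] crp_table_closed[OF p yT] by (cases "\<sigma> y = c") auto
    qed
  qed
qed

lemma crp_table_subset_orbit_sit_left: "crp_table \<sigma> c \<subseteq> orbit (sit_left \<sigma> (Suc m) c) c"
proof
  fix z assume "z \<in> crp_table \<sigma> c"
  then have "z \<in> orbit \<sigma> c" unfolding crp_table_eq_orbit[OF p] .
  then show "z \<in> orbit (sit_left \<sigma> (Suc m) c) c"
  proof induction
    case base
    show ?case
    proof (cases "\<sigma> c = c")
      case True then show ?thesis using permutation_self_in_orbit[OF permutation_sit_left] by simp
    next
      case False then show ?thesis using sit_left_old[OF c] orbit.base[of "sit_left \<sigma> (Suc m) c" c] by simp
    qed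
  next
    case (step y)
    have "y \<in> crp_table \<sigma> c" using step(1) unfolding crp_table_eq_orbit[OF p] .
    then have ym: "y \<in> {1..m}" using crp_table_subset[OF p c] by auto
    show ?case
    proof (cases "\<sigma> y = c")
      case True then show ?thesis using permutation_self_in_orbit[OF permutation_sit_left] by simp
    next
      case False then show ?thesis using sit_left_old[OF ym] orbit.step[OF step(2)] by simp
    qed
  qed
qed

text \<open>The new customer sits to the left of c, i.e. right after the predecessor inv \<sigma> c of c.\<close>
lemma new_customer_in_orbit_sit_left: "Suc m \<in> orbit (sit_left \<sigma> (Suc m) c) c"
proof -
  let ?d = "inv \<sigma> c"
  have sd: "\<sigma> ?d = c" using permutes_inverses(1)[OF p] .
  have dm: "?d \<in> {1..m}" using permutes_in_image[OF permutes_inv[OF p]] c by blast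
  have "c \<in> crp_table \<sigma> ?d" using crp_table_closed[OF p crp_table_self[OF p, of ?d]] sd by simp
  then have "crp_table \<sigma> c = crp_table \<sigma> ?d" by (rule crp_table_eq[OF p])
  then have "?d \<in> orbit (sit_left \<sigma> (Suc m) c) c"
    using crp_table_self[OF p, of ?d] crp_table_subset_orbit_sit_left by auto
  from orbit.step[OF this] show ?thesis using sit_left_old[OF dm] sd by simp
qed

lemma crp_table_sit_left_joined: "crp_table (sit_left \<sigma> (Suc m) c) c = insert (Suc m) (crp_table \<sigma> c)"
proof -
  have "orbit (sit_left \<sigma> (Suc m) c) c = insert (Suc m) (crp_table \<sigma> c)"
    using orbit_sit_left_subset crp_table_subset_orbit_sit_left new_customer_in_orbit_sit_left by auto
  then show ?thesis unfolding crp_table_def orbit_altdef_permutation[OF permutation_sit_left] .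
qed

lemma crp_table_sit_left_joined_member:
  assumes y: "y \<in> insert (Suc m) (crp_table \<sigma> c)"
  shows "crp_table (sit_left \<sigma> (Suc m) c) y = insert (Suc m) (crp_table \<sigma> c)"
proof -
  have y': "y \<in> crp_table (sit_left \<sigma> (Suc m) c) c" using y crp_table_sit_left_joined by simp
  show ?thesis using crp_table_eq[OF sit_left_permutes[OF p c] y'] crp_table_sit_left_joined by simp
qed

lemma crp_tables_sit_left: "crp_tables (Suc m) (sit_left \<sigma> (Suc m) c) = insert (insert (Suc m) (crp_table \<sigma> c)) (crp_tables m \<sigma> - {crp_table \<sigma> c})"
proof -
  let ?T = "crp_table \<sigma> c"
  have Tm: "?T \<subseteq> {1..m}" by (rule crp_table_subset[OF p c])
  have split: "{1..Suc m} = insert (Suc m) ?T \<union> ({1..m} - ?T)" using Tm by auto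
  have a: "crp_table (sit_left \<sigma> (Suc m) c) ` insert (Suc m) ?T = {insert (Suc m) ?T}"
    using crp_table_sit_left_joined_member by auto
  have b: "crp_table (sit_left \<sigma> (Suc m) c) ` ({1..m} - ?T) = crp_table \<sigma> ` ({1..m} - ?T)"
    using crp_table_sit_left_other by (intro image_cong) auto
  have c2: "crp_table \<sigma> ` ({1..m} - ?T) = crp_tables m \<sigma> - {?T}"
  proof
    show "crp_table \<sigma> ` ({1..m} - ?T) \<subseteq> crp_tables m \<sigma> - {?T}"
    proof
      fix U assume "U \<in> crp_table \<sigma> ` ({1..m} - ?T)"
      then obtain y where y: "y \<in> {1..m}" "y \<notin> ?T" "U = crp_table \<sigma> y" by auto
      have "U \<noteq> ?T" using y crp_table_self[OF p, of y] by auto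
      then show "U \<in> crp_tables m \<sigma> - {?T}" using y unfolding crp_tables_def by auto
    qed
  next
    show "crp_tables m \<sigma> - {?T} \<subseteq> crp_table \<sigma> ` ({1..m} - ?T)"
    proof
      fix U assume U: "U \<in> crp_tables m \<sigma> - {?T}"
      then have U1: "U \<in> crp_table \<sigma> ` {1..m}" "U \<noteq> ?T" unfolding crp_tables_def by auto
      from U1(1) obtain y where y: "y \<in> {1..m}" "U = crp_table \<sigma> y" by blast
      note y = y U1(2)
      have "y \<notin> ?T" using y crp_table_eq[OF p, of y c] by auto
      then show "U \<in> crp_table \<sigma> ` ({1..m} - ?T)" using y by auto
    qed
  qed
  show ?thesis unfolding crp_tables_def split image_Un a b c2[unfolded crp_tables_def] by simp
qed

end

section \<open>Ewens sampling formula\<close>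

text \<open>a \<in> part_vectors m records a partition of m by its multiplicities: a i parts of size i,
  and a i = 0 outside {1..m}. The Ewens weight of a is the probability that CRP(m) has
  exactly a i tables with i customers for every i.\<close>
definition part_vectors :: "nat \<Rightarrow> (nat \<Rightarrow> nat) set" where
  "part_vectors m = {a. (\<forall>i. i \<notin> {1..m} \<longrightarrow> a i = 0) \<and> (\<Sum>i=1..m. i * a i) = m}"

definition ewens_factor :: "nat \<Rightarrow> nat \<Rightarrow> real" where
  "ewens_factor i k = 1 / (fact k * real i ^ k)"

definition ewens_weight :: "nat \<Rightarrow> (nat \<Rightarrow> nat) \<Rightarrow> real" where
  "ewens_weight m a = (\<Prod>i=1..m. ewens_factor i (a i))"

definition add_singleton :: "(nat \<Rightarrow> nat) \<Rightarrow> nat \<Rightarrow> nat" where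
  "add_singleton a = a(1 := Suc (a 1))"

definition grow_part :: "(nat \<Rightarrow> nat) \<Rightarrow> nat \<Rightarrow> nat \<Rightarrow> nat" where
  "grow_part a s = a(s := a s - 1, Suc s := Suc (a (Suc s)))"

lemma part_vectors_bound: "a \<in> part_vectors m \<Longrightarrow> a i \<le> m"
proof -
  assume a: "a \<in> part_vectors m"
  show "a i \<le> m"
  proof (cases "i \<in> {1..m}")
    case True
    have "a i \<le> i * a i" using True by simp
    also have "\<dots> \<le> (\<Sum>i=1..m. i * a i)" using True by (intro member_le_sum) auto
    finally show ?thesis using a unfolding part_vectors_def by simp
  next
    case False then show ?thesis using a unfolding part_vectors_def by simp
  qed
qed

lemma finite_part_vectors: "finite (part_vectors m)"
proof -
  have "part_vectors m \<subseteq> {f. \<forall>x. (x \<in> {0..m} \<longrightarrow> f x \<in> {0..m}) \<and> (x \<notin> {0..m} \<longrightarrow> f x = 0)}"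
  proof
    fix a assume a: "a \<in> part_vectors m"
    have z: "\<forall>i. i \<notin> {1..m} \<longrightarrow> a i = 0" using a unfolding part_vectors_def by blast
    show "a \<in> {f. \<forall>x. (x \<in> {0..m} \<longrightarrow> f x \<in> {0..m}) \<and> (x \<notin> {0..m} \<longrightarrow> f x = 0)}"
      using part_vectors_bound[OF a] z by auto
  qed
  moreover have "finite {f. \<forall>x. (x \<in> {0..m} \<longrightarrow> f x \<in> {0..m}) \<and> (x \<notin> {0..m} \<longrightarrow> f x = (0::nat))}"
    by (rule finite_set_of_finite_funs) auto
  ultimately show ?thesis by (rule finite_subset)
qed

lemma ewens_factor_0: "ewens_factor i 0 = 1" unfolding ewens_factor_def by simp

lemma ewens_weight_extend: "a \<in> part_vectors m \<Longrightarrow> m \<le> N \<Longrightarrow> ewens_weight N a = ewens_weight m a"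
proof -
  assume a: "a \<in> part_vectors m" and N: "m \<le> N"
  have "{1..N} = {1..m} \<union> {Suc m..N}" using N by auto
  moreover have "(\<Prod>i\<in>{Suc m..N}. ewens_factor i (a i)) = 1"
    using a unfolding part_vectors_def by (intro prod.neutral) (auto simp: ewens_factor_0)
  ultimately show ?thesis unfolding ewens_weight_def by (simp add: prod.union_disjoint ivl_disj_int)
qed

lemma sum_fun_upd_add:
  fixes f :: "nat \<Rightarrow> nat \<Rightarrow> nat"
  assumes "finite I" "k \<in> I"
  shows "(\<Sum>i\<in>I. f i ((a(k := v)) i)) + f k (a k) = (\<Sum>i\<in>I. f i (a i)) + f k v"
proof -
  have "(\<Sum>i\<in>I. f i ((a(k := v)) i)) = f k v + (\<Sum>i\<in>I - {k}. f i (a i))"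
    using assms by (simp add: sum.remove)
  moreover have "(\<Sum>i\<in>I. f i (a i)) = f k (a k) + (\<Sum>i\<in>I - {k}. f i (a i))"
    using assms by (simp add: sum.remove)
  ultimately show ?thesis by simp
qed

lemma part_vectors_sum_extend:
  fixes f :: "nat \<Rightarrow> nat \<Rightarrow> 'b::comm_monoid_add"
  assumes b: "b \<in> part_vectors M" and MN: "M \<le> N" and f0: "\<And>i. f i 0 = 0"
  shows "(\<Sum>i=1..N. f i (b i)) = (\<Sum>i=1..M. f i (b i))"
proof -
  have z: "\<forall>i. i \<notin> {1..M} \<longrightarrow> b i = 0" using b unfolding part_vectors_def by simp
  show ?thesis using MN z f0 by (intro sum.mono_neutral_right) auto
qed

lemma part_vectors_iff:
  assumes MN: "M \<le> N" and z: "\<forall>i. i \<notin> {1..N} \<longrightarrow> b i = 0"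
  shows "b \<in> part_vectors M \<longleftrightarrow> (\<Sum>i=1..N. i * b i) = M"
proof
  assume "b \<in> part_vectors M"
  then show "(\<Sum>i=1..N. i * b i) = M"
    using part_vectors_sum_extend[of b M N "\<lambda>i x. i * x"] MN by (simp add: part_vectors_def)
next
  assume s: "(\<Sum>i=1..N. i * b i) = M"
  have bz: "b i = 0" if i: "i \<in> {Suc M..N}" for i
  proof -
    have "i * b i \<le> (\<Sum>i=1..N. i * b i)" using i by (intro member_le_sum) auto
    then have "i * b i \<le> M" using s by simp
    then show "b i = 0" using i by (cases "b i") auto
  qed
  have "(\<Sum>i=1..N. i * b i) = (\<Sum>i=1..M. i * b i)"
    using MN bz by (intro sum.mono_neutral_right) auto
  moreover have "\<forall>i. i \<notin> {1..M} \<longrightarrow> b i = 0" using z bz by (metis atLeastAtMost_iff not_less_eq_eq)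
  ultimately show "b \<in> part_vectors M" unfolding part_vectors_def using s by simp
qed

lemma part_vectors_add_part:
  assumes b: "b \<in> part_vectors (m - j)" and j: "j \<in> {1..m}"
  shows "b(j := Suc (b j)) \<in> part_vectors m"
proof -
  have z: "\<forall>i. i \<notin> {1..m} \<longrightarrow> b i = 0" using b j unfolding part_vectors_def by auto
  have "(\<Sum>i=1..m. i * (b(j := Suc (b j))) i) + j * b j = (\<Sum>i=1..m. i * b i) + j * Suc (b j)"
    by (rule sum_fun_upd_add) (use j in auto)
  moreover have "(\<Sum>i=1..m. i * b i) = m - j" using part_vectors_iff[of "m - j" m b] b z by simp
  ultimately have "(\<Sum>i=1..m. i * (b(j := Suc (b j))) i) = m" using j by simp
  then show ?thesis using z j by (subst part_vectors_iff[of m m]) auto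
qed

lemma part_vectors_remove_part:
  assumes a: "a \<in> part_vectors m" and aj: "a j \<noteq> 0" and j: "j \<in> {1..m}"
  shows "a(j := a j - 1) \<in> part_vectors (m - j)"
proof -
  have z: "\<forall>i. i \<notin> {1..m} \<longrightarrow> a i = 0" and s: "(\<Sum>i=1..m. i * a i) = m"
    using a unfolding part_vectors_def by auto
  have "(\<Sum>i=1..m. i * (a(j := a j - 1)) i) + j * a j = (\<Sum>i=1..m. i * a i) + j * (a j - 1)"
    by (rule sum_fun_upd_add) (use j in auto)
  moreover have "j * (a j - 1) + j = j * a j" using aj by (cases "a j") auto
  ultimately have "(\<Sum>i=1..m. i * (a(j := a j - 1)) i) = m - j" using s by simp
  then show ?thesis using z j by (subst part_vectors_iff[of "m - j" m]) auto
qed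

lemma ewens_factor_Suc: "i > 0 \<Longrightarrow> ewens_factor i (Suc k) * (real (Suc k) * real i) = ewens_factor i k"
  unfolding ewens_factor_def by (simp add: ac_simps)

lemma ewens_weight_upd_Suc:
  assumes i: "i \<in> {1..N}"
  shows "ewens_weight N (a(i := Suc (a i))) * (real (Suc (a i)) * real i) = ewens_weight N a"
proof -
  define R where "R = (\<Prod>l\<in>{1..N} - {i}. ewens_factor l (a l))"
  have "ewens_weight N (a(i := Suc (a i))) = ewens_factor i (Suc (a i)) * R"
    using i unfolding ewens_weight_def R_def by (simp add: prod.remove)
  moreover have "ewens_weight N a = ewens_factor i (a i) * R"
    using i unfolding ewens_weight_def R_def by (simp add: prod.remove)
  moreover have "ewens_factor i (Suc (a i)) * (real (Suc (a i)) * real i) = ewens_factor i (a i)"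
    using i by (intro ewens_factor_Suc) auto
  ultimately show ?thesis by (metis mult.assoc mult.commute)
qed

text \<open>Adding a part of size j is a bijection from the partitions of m - j onto the partitions
  of m that have a part of size j.\<close>
lemma sum_part_vectors_add_part:
  fixes G :: "(nat \<Rightarrow> nat) \<Rightarrow> real"
  assumes j: "j \<in> {1..m}"
  shows "(\<Sum>b\<in>part_vectors (m - j). ewens_weight (m - j) b * G (b(j := Suc (b j))))
       = (\<Sum>a\<in>part_vectors m. real j * real (a j) * ewens_weight m a * G a)"
proof -
  have weight: "ewens_weight (m - j) b = real j * real (Suc (b j)) * ewens_weight m (b(j := Suc (b j)))"
    if b: "b \<in> part_vectors (m - j)" for b
    using ewens_weight_upd_Suc[OF j, of b] ewens_weight_extend[OF b, of m] by (simp add: ac_simps)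
  have "(\<Sum>a\<in>part_vectors m. real j * real (a j) * ewens_weight m a * G a)
      = (\<Sum>a\<in>{a \<in> part_vectors m. a j \<noteq> 0}. real j * real (a j) * ewens_weight m a * G a)"
    by (rule sum.mono_neutral_right) (auto simp: finite_part_vectors)
  also have "\<dots> = (\<Sum>b\<in>part_vectors (m - j). ewens_weight (m - j) b * G (b(j := Suc (b j))))"
  proof (rule sum.reindex_bij_witness[where i = "\<lambda>b. b(j := Suc (b j))" and j = "\<lambda>a. a(j := a j - 1)"])
    fix a assume "a \<in> {a \<in> part_vectors m. a j \<noteq> 0}"
    then have a: "a \<in> part_vectors m" "a j \<noteq> 0" by auto
    show "(a(j := a j - 1))(j := Suc ((a(j := a j - 1)) j)) = a" using a by auto
    show b: "a(j := a j - 1) \<in> part_vectors (m - j)" by (rule part_vectors_remove_part[OF a j])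
    show "ewens_weight (m - j) (a(j := a j - 1)) * G ((a(j := a j - 1))(j := Suc ((a(j := a j - 1)) j)))
        = real j * real (a j) * ewens_weight m a * G a"
      using weight[OF b] a by simp
  next
    fix b assume b: "b \<in> part_vectors (m - j)"
    show "(b(j := Suc (b j)))(j := (b(j := Suc (b j))) j - 1) = b" by simp
    show "b(j := Suc (b j)) \<in> {a \<in> part_vectors m. a j \<noteq> 0}"
      using part_vectors_add_part[OF b j] by simp
  qed
  finally show ?thesis by simp
qed

lemma sum_ewens_add_singleton:
  fixes G :: "(nat \<Rightarrow> nat) \<Rightarrow> real"
  shows "(\<Sum>a\<in>part_vectors m. ewens_weight m a * G (add_singleton a))
       = (\<Sum>b\<in>part_vectors (Suc m). ewens_weight (Suc m) b * real (b 1) * G b)"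
  using sum_part_vectors_add_part[of 1 "Suc m" G] by (simp add: add_singleton_def ac_simps)

lemma sum_ewens_grow_part:
  fixes G :: "(nat \<Rightarrow> nat) \<Rightarrow> real"
  assumes s: "s \<in> {1..m}"
  shows "(\<Sum>a\<in>part_vectors m. ewens_weight m a * (real s * real (a s)) * G (grow_part a s))
       = (\<Sum>b\<in>part_vectors (Suc m). ewens_weight (Suc m) b * (real (Suc s) * real (b (Suc s))) * G b)"
proof -
  have grow: "grow_part (c(s := Suc (c s))) s = c(Suc s := Suc (c (Suc s)))" for c :: "nat \<Rightarrow> nat"
    unfolding grow_part_def by (auto simp: fun_eq_iff)
  have "(\<Sum>a\<in>part_vectors m. ewens_weight m a * (real s * real (a s)) * G (grow_part a s))
      = (\<Sum>c\<in>part_vectors (m - s). ewens_weight (m - s) c * G (c(Suc s := Suc (c (Suc s)))))"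
    using sum_part_vectors_add_part[OF s, of "\<lambda>a. G (grow_part a s)"] by (simp add: grow ac_simps)
  also have "\<dots> = (\<Sum>b\<in>part_vectors (Suc m). ewens_weight (Suc m) b * (real (Suc s) * real (b (Suc s))) * G b)"
    using sum_part_vectors_add_part[of "Suc s" "Suc m" G] s by (simp add: ac_simps)
  finally show ?thesis .
qed

lemma part_vectors_Suc_sum:
  assumes b: "b \<in> part_vectors (Suc m)"
  shows "real (b 1) + (\<Sum>s=1..m. real (Suc s) * real (b (Suc s))) = real (Suc m)"
proof -
  have "(\<Sum>i=1..Suc m. i * b i) = Suc m" using b unfolding part_vectors_def by simp
  moreover have "(\<Sum>i=1..Suc m. i * b i) = b 1 + (\<Sum>i=Suc 1..Suc m. i * b i)"
    by (simp add: sum.atLeast_Suc_atMost)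
  moreover have "(\<Sum>i=Suc 1..Suc m. i * b i) = (\<Sum>s=1..m. Suc s * b (Suc s))"
    by (rule sum.shift_bounds_cl_Suc_ivl)
  ultimately have "b 1 + (\<Sum>s=1..m. Suc s * b (Suc s)) = Suc m" by simp
  then have "real (b 1 + (\<Sum>s=1..m. Suc s * b (Suc s))) = real (Suc m)" by simp
  then show ?thesis by (simp only: of_nat_add of_nat_sum of_nat_mult)
qed

lemma sum_ewens_step:
  fixes G :: "(nat \<Rightarrow> nat) \<Rightarrow> real"
  shows "(\<Sum>a\<in>part_vectors m. ewens_weight m a * ((G (add_singleton a) + (\<Sum>s=1..m. real s * real (a s) * G (grow_part a s))) / real (Suc m)))
       = (\<Sum>b\<in>part_vectors (Suc m). ewens_weight (Suc m) b * G b)"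
proof -
  have "(\<Sum>a\<in>part_vectors m. ewens_weight m a * ((G (add_singleton a) + (\<Sum>s=1..m. real s * real (a s) * G (grow_part a s))) / real (Suc m)))
      = ((\<Sum>a\<in>part_vectors m. ewens_weight m a * G (add_singleton a)) + (\<Sum>s=1..m. \<Sum>a\<in>part_vectors m. ewens_weight m a * (real s * real (a s)) * G (grow_part a s))) / real (Suc m)"
    by (simp add: sum_divide_distrib[symmetric] sum.distrib distrib_left sum_distrib_left mult.assoc
        add_divide_distrib) (rule sum.swap)
  also have "\<dots> = ((\<Sum>b\<in>part_vectors (Suc m). ewens_weight (Suc m) b * real (b 1) * G b)
        + (\<Sum>s=1..m. \<Sum>b\<in>part_vectors (Suc m). ewens_weight (Suc m) b * (real (Suc s) * real (b (Suc s))) * G b)) / real (Suc m)"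
    by (simp add: sum_ewens_add_singleton sum_ewens_grow_part)
  also have "\<dots> = (\<Sum>b\<in>part_vectors (Suc m). ewens_weight (Suc m) b * G b * (real (b 1) + (\<Sum>s=1..m. real (Suc s) * real (b (Suc s))))) / real (Suc m)"
    by (simp add: sum_distrib_left distrib_left sum.distrib ac_simps) (rule sum.swap)
  also have "\<dots> = (\<Sum>b\<in>part_vectors (Suc m). ewens_weight (Suc m) b * G b * real (Suc m)) / real (Suc m)"
  proof -
    have e: "\<And>b. b \<in> part_vectors (Suc m) \<Longrightarrow> ewens_weight (Suc m) b * G b * (real (b 1) + (\<Sum>s=1..m. real (Suc s) * real (b (Suc s))))
        = ewens_weight (Suc m) b * G b * real (Suc m)"
    proof -
      fix b assume "b \<in> part_vectors (Suc m)"
      then show "ewens_weight (Suc m) b * G b * (real (b 1) + (\<Sum>s=1..m. real (Suc s) * real (b (Suc s)))) = ewens_weight (Suc m) b * G b * real (Suc m)"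
        by (simp only: part_vectors_Suc_sum)
    qed
    show ?thesis using sum.cong[OF refl e] by simp
  qed
  also have "\<dots> = (\<Sum>b\<in>part_vectors (Suc m). ewens_weight (Suc m) b * G b)"
    by (simp add: sum_distrib_right[symmetric])
  finally show ?thesis .
qed

definition table_counts :: "nat \<Rightarrow> (nat \<Rightarrow> nat) \<Rightarrow> nat \<Rightarrow> nat" where
  "table_counts m \<sigma> = (\<lambda>i. crp_A m i \<sigma>)"

lemma finite_crp_tables: "finite (crp_tables m \<sigma>)"
  unfolding crp_tables_def by simp

lemma card_filter_insert:
  assumes "finite A" "x \<notin> A"
  shows "card {U \<in> insert x A. P U} = card {U \<in> A. P U} + (if P x then 1 else 0)"
proof -
  have "{U \<in> insert x A. P U} = (if P x then insert x {U \<in> A. P U} else {U \<in> A. P U})" by auto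
  then show ?thesis using assms by auto
qed

context
  fixes \<sigma> :: "nat \<Rightarrow> nat" and m :: nat
  assumes p: "\<sigma> permutes {1..m}"
begin

lemma singleton_Suc_notin_crp_tables: "{Suc m} \<notin> crp_tables m \<sigma>"
proof
  assume "{Suc m} \<in> crp_tables m \<sigma>"
  then have "{Suc m} \<subseteq> {1..m}" by (rule crp_tables_subset[OF p])
  then show False by auto
qed

lemma table_counts_Suc_new: "table_counts (Suc m) \<sigma> = add_singleton (table_counts m \<sigma>)"
proof
  fix i
  show "table_counts (Suc m) \<sigma> i = add_singleton (table_counts m \<sigma>) i"
    unfolding table_counts_def add_singleton_def crp_A_def crp_tables_Suc[OF p]
    using card_filter_insert[OF finite_crp_tables singleton_Suc_notin_crp_tables, of "\<lambda>T. card T = i"] by auto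
qed

lemma crp_K_Suc_new: "crp_K (Suc m) \<sigma> = Suc (crp_K m \<sigma>)"
  unfolding crp_K_def crp_tables_Suc[OF p] using singleton_Suc_notin_crp_tables finite_crp_tables by simp

lemma crp_K_eq_sum_crp_A: "crp_K m \<sigma> = (\<Sum>i=1..m. crp_A m i \<sigma>)"
proof -
  have "crp_K m \<sigma> = (\<Sum>T\<in>crp_tables m \<sigma>. 1)" unfolding crp_K_def by simp
  also have "\<dots> = (\<Sum>i\<in>{1..m}. \<Sum>T\<in>{T \<in> crp_tables m \<sigma>. card T = i}. 1)"
    using card_crp_tables[OF p] by (intro sum.group[symmetric]) (auto simp: finite_crp_tables)
  also have "\<dots> = (\<Sum>i=1..m. crp_A m i \<sigma>)" unfolding crp_A_def by simp
  finally show ?thesis .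
qed

lemma sum_over_customers_by_table:
  fixes \<phi> :: "nat \<Rightarrow> real"
  shows "(\<Sum>c\<in>{1..m}. \<phi> (card (crp_table \<sigma> c))) = (\<Sum>s=1..m. real s * real (crp_A m s \<sigma>) * \<phi> s)"
proof -
  have "(\<Sum>c\<in>{1..m}. \<phi> (card (crp_table \<sigma> c)))
      = (\<Sum>U\<in>crp_tables m \<sigma>. \<Sum>c\<in>{c \<in> {1..m}. crp_table \<sigma> c = U}. \<phi> (card (crp_table \<sigma> c)))"
    unfolding crp_tables_def by (intro sum.group[symmetric]) auto
  also have "\<dots> = (\<Sum>U\<in>crp_tables m \<sigma>. real (card U) * \<phi> (card U))"
  proof (rule sum.cong[OF refl])
    fix U assume U: "U \<in> crp_tables m \<sigma>"
    then obtain d where d: "d \<in> {1..m}" "U = crp_table \<sigma> d" unfolding crp_tables_def by auto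
    have "{c \<in> {1..m}. crp_table \<sigma> c = U} = U"
    proof
      show "{c \<in> {1..m}. crp_table \<sigma> c = U} \<subseteq> U" using crp_table_self[OF p] by auto
      show "U \<subseteq> {c \<in> {1..m}. crp_table \<sigma> c = U}"
        using d crp_table_eq[OF p] crp_table_subset[OF p d(1)] by auto
    qed
    moreover have "(\<Sum>c\<in>U. \<phi> (card (crp_table \<sigma> c))) = (\<Sum>c\<in>U. \<phi> (card U))"
      by (rule sum.cong[OF refl]) (use d crp_table_eq[OF p] in auto)
    ultimately show "(\<Sum>c\<in>{c \<in> {1..m}. crp_table \<sigma> c = U}. \<phi> (card (crp_table \<sigma> c))) = real (card U) * \<phi> (card U)"
      by simp
  qed
  also have "\<dots> = (\<Sum>s\<in>{1..m}. \<Sum>U\<in>{U \<in> crp_tables m \<sigma>. card U = s}. real (card U) * \<phi> (card U))"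
    using card_crp_tables[OF p] by (intro sum.group[symmetric]) (auto simp: finite_crp_tables)
  also have "\<dots> = (\<Sum>s=1..m. real s * real (crp_A m s \<sigma>) * \<phi> s)"
    unfolding crp_A_def by (intro sum.cong refl) simp
  finally show ?thesis .
qed

end

context
  fixes \<sigma> :: "nat \<Rightarrow> nat" and m c :: nat
  assumes p: "\<sigma> permutes {1..m}" and c: "c \<in> {1..m}"
begin

lemma joined_table_notin: "insert (Suc m) (crp_table \<sigma> c) \<notin> crp_tables m \<sigma> - {crp_table \<sigma> c}"
proof
  assume "insert (Suc m) (crp_table \<sigma> c) \<in> crp_tables m \<sigma> - {crp_table \<sigma> c}"
  then have "insert (Suc m) (crp_table \<sigma> c) \<subseteq> {1..m}" using crp_tables_subset[OF p] by blast
  then show False by auto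
qed

lemma table_counts_sit_left: "table_counts (Suc m) (sit_left \<sigma> (Suc m) c) = grow_part (table_counts m \<sigma>) (card (crp_table \<sigma> c))"
proof
  fix i
  let ?T = "crp_table \<sigma> c"
  let ?s = "card ?T"
  have Tin: "?T \<in> crp_tables m \<sigma>" unfolding crp_tables_def using c by auto
  have fT: "finite ?T" by (rule finite_crp_table[OF p])
  have xT: "Suc m \<notin> ?T" using crp_table_subset[OF p c] by auto
  have ci: "card (insert (Suc m) ?T) = Suc ?s" using fT xT by simp
  have f2: "finite (crp_tables m \<sigma> - {?T})" using finite_crp_tables by simp
  have A1: "card {U \<in> crp_tables m \<sigma> - {?T}. card U = i} = crp_A m i \<sigma> - (if ?s = i then 1 else 0)"
  proof -
    have "{U \<in> crp_tables m \<sigma> - {?T}. card U = i} = {U \<in> crp_tables m \<sigma>. card U = i} - {?T}" by auto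
    then show ?thesis unfolding crp_A_def using Tin finite_crp_tables by (simp add: card_Diff_singleton_if)
  qed
  have As: "crp_A m ?s \<sigma> \<ge> 1"
  proof -
    have "?T \<in> {U \<in> crp_tables m \<sigma>. card U = ?s}" using Tin by simp
    moreover have "finite {U \<in> crp_tables m \<sigma>. card U = ?s}" using finite_crp_tables by simp
    ultimately have "card {U \<in> crp_tables m \<sigma>. card U = ?s} > 0" using card_gt_0_iff by blast
    then show ?thesis unfolding crp_A_def by simp
  qed
  have "table_counts (Suc m) (sit_left \<sigma> (Suc m) c) i
      = card {U \<in> crp_tables m \<sigma> - {?T}. card U = i} + (if Suc ?s = i then 1 else 0)"
    unfolding table_counts_def crp_A_def[of "Suc m"] crp_tables_sit_left[OF p c]
    using card_filter_insert[OF f2 joined_table_notin, of "\<lambda>T. card T = i"] ci by simp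
  also have "\<dots> = grow_part (table_counts m \<sigma>) ?s i"
    unfolding A1 grow_part_def table_counts_def using As by auto
  finally show "table_counts (Suc m) (sit_left \<sigma> (Suc m) c) i = grow_part (table_counts m \<sigma>) ?s i" .
qed

lemma crp_K_sit_left: "crp_K (Suc m) (sit_left \<sigma> (Suc m) c) = crp_K m \<sigma>"
proof -
  have Tin: "crp_table \<sigma> c \<in> crp_tables m \<sigma>" unfolding crp_tables_def using c by auto
  have "card (crp_tables m \<sigma>) > 0" using Tin finite_crp_tables card_gt_0_iff by blast
  then show ?thesis
    unfolding crp_K_def crp_tables_sit_left[OF p c]
    using joined_table_notin finite_crp_tables Tin by (simp add: card_Diff_singleton)
qed

end

section \<open>Laws of the table statistics\<close>

lemma expectation_crp_Suc:
  fixes F :: "(nat \<Rightarrow> nat) \<Rightarrow> real"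
  shows "measure_pmf.expectation (crp (Suc m)) F =
    measure_pmf.expectation (crp m) (\<lambda>\<sigma>. (\<Sum>c\<in>{1..Suc m}. F (if c = Suc m then \<sigma> else sit_left \<sigma> (Suc m) c)) / real (Suc m))"
proof -
  have "measure_pmf.expectation (crp (Suc m)) F = measure_pmf.expectation (crp m)
      (\<lambda>\<sigma>. measure_pmf.expectation (pmf_of_set {1..Suc m} \<bind> (\<lambda>c. return_pmf (if c = Suc m then \<sigma> else sit_left \<sigma> (Suc m) c))) F)"
    unfolding crp.simps by (rule pmf_expectation_bind_finite) (auto simp: finite_set_pmf_crp)
  also have "\<dots> = measure_pmf.expectation (crp m) (\<lambda>\<sigma>. (\<Sum>c\<in>{1..Suc m}. F (if c = Suc m then \<sigma> else sit_left \<sigma> (Suc m) c)) / real (Suc m))"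
  proof (rule pmf_expectation_cong)
    fix \<sigma>
    show "measure_pmf.expectation (pmf_of_set {1..Suc m} \<bind> (\<lambda>c. return_pmf (if c = Suc m then \<sigma> else sit_left \<sigma> (Suc m) c))) F
        = (\<Sum>c\<in>{1..Suc m}. F (if c = Suc m then \<sigma> else sit_left \<sigma> (Suc m) c)) / real (Suc m)"
      by (subst pmf_expectation_bind_pmf_of_set) (auto simp: sum_divide_distrib sum_distrib_left[symmetric] divide_inverse_commute add_divide_distrib)
  qed
  finally show ?thesis .
qed

lemma sum_atLeast1_atMost_Suc: "(\<Sum>c\<in>{1..Suc m}. f c) = f (Suc m) + (\<Sum>c\<in>{1..m}. f c)"
  by (simp add: sum.cl_ivl_Suc add.commute)

lemma expectation_crp_K:
  fixes g :: "nat \<Rightarrow> real"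
  shows "measure_pmf.expectation (crp m) (\<lambda>\<sigma>. g (crp_K m \<sigma>)) = (\<Sum>k=0..m. tables_prob m k * g k)"
proof (induction m arbitrary: g)
  case 0
  show ?case by (simp add: crp_K_def crp_tables_def)
next
  case (Suc m)
  have "measure_pmf.expectation (crp (Suc m)) (\<lambda>\<sigma>. g (crp_K (Suc m) \<sigma>))
      = measure_pmf.expectation (crp m) (\<lambda>\<sigma>. (g (Suc (crp_K m \<sigma>)) + real m * g (crp_K m \<sigma>)) / real (Suc m))"
    unfolding expectation_crp_Suc
  proof (rule pmf_expectation_cong)
    fix \<sigma> assume "\<sigma> \<in> set_pmf (crp m)"
    then have p: "\<sigma> permutes {1..m}" by (rule crp_permutes)
    have "(\<Sum>c\<in>{1..m}. g (crp_K (Suc m) (if c = Suc m then \<sigma> else sit_left \<sigma> (Suc m) c))) = (\<Sum>c\<in>{1..m}. g (crp_K m \<sigma>))"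
      by (intro sum.cong refl) (auto simp: crp_K_sit_left[OF p])
    then show "(\<Sum>c\<in>{1..Suc m}. g (crp_K (Suc m) (if c = Suc m then \<sigma> else sit_left \<sigma> (Suc m) c))) / real (Suc m)
        = (g (Suc (crp_K m \<sigma>)) + real m * g (crp_K m \<sigma>)) / real (Suc m)"
      unfolding sum_atLeast1_atMost_Suc by (simp add: crp_K_Suc_new[OF p])
  qed
  also have "\<dots> = (\<Sum>k=0..m. tables_prob m k * ((g (Suc k) + real m * g k) / real (Suc m)))"
    by (rule Suc.IH)
  also have "\<dots> = (\<Sum>k=0..Suc m. tables_prob (Suc m) k * g k)"
    by (rule sum_tables_prob_Suc[symmetric])
  finally show ?case .
qed

lemma part_vectors_0: "part_vectors 0 = {\<lambda>_. 0}"
  unfolding part_vectors_def by (auto simp: fun_eq_iff)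

lemma expectation_crp_table_counts:
  fixes G :: "(nat \<Rightarrow> nat) \<Rightarrow> real"
  shows "measure_pmf.expectation (crp m) (\<lambda>\<sigma>. G (table_counts m \<sigma>)) = (\<Sum>a\<in>part_vectors m. ewens_weight m a * G a)"
proof (induction m arbitrary: G)
  case 0
  have "table_counts 0 id = (\<lambda>_. 0)" unfolding table_counts_def crp_A_def crp_tables_def by simp
  then show ?case by (simp add: part_vectors_0 ewens_weight_def)
next
  case (Suc m)
  define H where "H a = (G (add_singleton a) + (\<Sum>s=1..m. real s * real (a s) * G (grow_part a s))) / real (Suc m)" for a
  have "measure_pmf.expectation (crp (Suc m)) (\<lambda>\<sigma>. G (table_counts (Suc m) \<sigma>))
      = measure_pmf.expectation (crp m) (\<lambda>\<sigma>. H (table_counts m \<sigma>))"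
    unfolding expectation_crp_Suc
  proof (rule pmf_expectation_cong)
    fix \<sigma> assume "\<sigma> \<in> set_pmf (crp m)"
    then have p: "\<sigma> permutes {1..m}" by (rule crp_permutes)
    have "(\<Sum>c\<in>{1..m}. G (table_counts (Suc m) (if c = Suc m then \<sigma> else sit_left \<sigma> (Suc m) c)))
        = (\<Sum>c\<in>{1..m}. G (grow_part (table_counts m \<sigma>) (card (crp_table \<sigma> c))))"
      by (intro sum.cong refl) (auto simp: table_counts_sit_left[OF p])
    also have "\<dots> = (\<Sum>s=1..m. real s * real (crp_A m s \<sigma>) * G (grow_part (table_counts m \<sigma>) s))"
      by (rule sum_over_customers_by_table[OF p])
    also have "\<dots> = (\<Sum>s=1..m. real s * real (table_counts m \<sigma> s) * G (grow_part (table_counts m \<sigma>) s))"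
      by (simp add: table_counts_def)
    finally show "(\<Sum>c\<in>{1..Suc m}. G (table_counts (Suc m) (if c = Suc m then \<sigma> else sit_left \<sigma> (Suc m) c))) / real (Suc m)
        = H (table_counts m \<sigma>)"
      unfolding sum_atLeast1_atMost_Suc H_def by (simp add: table_counts_Suc_new[OF p])
  qed
  also have "\<dots> = (\<Sum>a\<in>part_vectors m. ewens_weight m a * H a)" by (rule Suc.IH)
  also have "\<dots> = (\<Sum>b\<in>part_vectors (Suc m). ewens_weight (Suc m) b * G b)" unfolding H_def by (rule sum_ewens_step)
  finally show ?case .
qed

lemma sum_ewens_ratio:
  assumes j: "j \<in> {1..m}"
  shows "(\<Sum>a\<in>part_vectors m. ewens_weight m a * (real (a j) / real (\<Sum>i=1..m. a i)))
       = 1 / real j * (\<Sum>b\<in>part_vectors (m - j). ewens_weight (m - j) b * (1 / (1 + real (\<Sum>i=1..m - j. b i))))"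
proof -
  have size: "real (\<Sum>i=1..m. (b(j := Suc (b j))) i) = 1 + real (\<Sum>i=1..m - j. b i)"
    if b: "b \<in> part_vectors (m - j)" for b
  proof -
    have "(\<Sum>i=1..m. (b(j := Suc (b j))) i) + b j = (\<Sum>i=1..m. b i) + Suc (b j)"
      using sum_fun_upd_add[of "{1..m}" j "\<lambda>i x. x" b "Suc (b j)"] j by simp
    moreover have "(\<Sum>i=1..m. b i) = (\<Sum>i=1..m - j. b i)"
      using part_vectors_sum_extend[OF b, of m "\<lambda>i x. x"] by simp
    ultimately show ?thesis by simp
  qed
  have "(\<Sum>b\<in>part_vectors (m - j). ewens_weight (m - j) b * (1 / (1 + real (\<Sum>i=1..m - j. b i))))
      = (\<Sum>b\<in>part_vectors (m - j). ewens_weight (m - j) b * (1 / real (\<Sum>i=1..m. (b(j := Suc (b j))) i)))"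
    by (intro sum.cong refl) (simp only: size)
  also have "\<dots> = (\<Sum>a\<in>part_vectors m. real j * real (a j) * ewens_weight m a * (1 / real (\<Sum>i=1..m. a i)))"
    by (rule sum_part_vectors_add_part[OF j])
  also have "\<dots> = real j * (\<Sum>a\<in>part_vectors m. ewens_weight m a * (real (a j) / real (\<Sum>i=1..m. a i)))"
    by (simp add: sum_distrib_left ac_simps)
  finally show ?thesis using j by simp
qed

lemma sum_Gamma_set_reindex:
  assumes n: "n \<ge> 2" and j: "j \<in> {1..n - 1}"
  shows "(\<Sum>a\<in>part_vectors (n - 1). ewens_weight (n - 1) a * (real (a j) / real (\<Sum>i=1..n-1. a i)))
     = (\<Sum>a\<in>Gamma_set n. real (a j) / real (\<Sum>i=1..n-1. a i) * (\<Prod>i=1..n-1. 1 / (fact (a i) * real i ^ a i)))"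
proof (rule sum.reindex_bij_witness[where j = "\<lambda>a. restrict a {1..n-1}" and i = "\<lambda>b i. if i \<in> {1..n-1} then b i else 0"])
  fix a assume a: "a \<in> part_vectors (n - 1)"
  have za: "\<forall>i. i \<notin> {1..n-1} \<longrightarrow> a i = 0" and sa: "(\<Sum>i=1..n-1. i * a i) = n - 1" using a unfolding part_vectors_def by auto
  show "(\<lambda>i. if i \<in> {1..n - 1} then restrict a {1..n - 1} i else 0) = a" using za by (auto simp: fun_eq_iff)
  have "restrict a {1..n-1} \<in> {1..n-1} \<rightarrow>\<^sub>E {0..n-1}" using part_vectors_bound[OF a] by auto
  moreover have "(\<Sum>i=1..n-1. i * restrict a {1..n-1} i) = n - 1" using sa by simp
  ultimately show "restrict a {1..n-1} \<in> Gamma_set n" unfolding Gamma_set_def by simp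
  show "real (restrict a {1..n-1} j) / real (\<Sum>i=1..n-1. restrict a {1..n-1} i) * (\<Prod>i=1..n-1. 1 / (fact (restrict a {1..n-1} i) * real i ^ restrict a {1..n-1} i))
      = ewens_weight (n - 1) a * (real (a j) / real (\<Sum>i=1..n-1. a i))"
    using j unfolding ewens_weight_def ewens_factor_def by simp
next
  fix b assume b: "b \<in> Gamma_set n"
  then have bP: "b \<in> {1..n-1} \<rightarrow>\<^sub>E {0..n-1}" and sb: "(\<Sum>i=1..n-1. i * b i) = n - 1" unfolding Gamma_set_def by auto
  show "restrict (\<lambda>i. if i \<in> {1..n - 1} then b i else 0) {1..n - 1} = b"
    using bP by (auto simp: fun_eq_iff restrict_def PiE_def extensional_def)
  show "(\<lambda>i. if i \<in> {1..n - 1} then b i else 0) \<in> part_vectors (n - 1)"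
    unfolding part_vectors_def using sb by simp
qed

lemma expectation_crp_inv_Suc_K:
  "measure_pmf.expectation (crp m) (\<lambda>\<sigma>. 1 / (1 + real (crp_K m \<sigma>))) = mean_inv_Suc_tables m"
  using expectation_crp_K[of m "\<lambda>k. 1 / (1 + real k)"] unfolding mean_inv_Suc_tables_def
  by (simp add: add.commute)

lemma expectation_bern_seq_inv_Suc:
  "measure_pmf.expectation (bern_seq m) (\<lambda>b. 1 / (1 + (\<Sum>i=1..m. (if b i then 1 else 0 :: real))))
     = mean_inv_Suc_tables m"
  using expectation_bern_seq_sum[of m "\<lambda>x. 1 / (1 + x)"] unfolding mean_inv_Suc_tables_def
  by (simp add: add.commute)

lemma expectation_crp_table_counts_K:
  fixes G :: "(nat \<Rightarrow> nat) \<Rightarrow> nat \<Rightarrow> real"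
  shows "measure_pmf.expectation (crp m) (\<lambda>\<sigma>. G (table_counts m \<sigma>) (crp_K m \<sigma>))
       = (\<Sum>a\<in>part_vectors m. ewens_weight m a * G a (\<Sum>i=1..m. a i))"
proof -
  have "measure_pmf.expectation (crp m) (\<lambda>\<sigma>. G (table_counts m \<sigma>) (crp_K m \<sigma>))
      = measure_pmf.expectation (crp m) (\<lambda>\<sigma>. (\<lambda>a. G a (\<Sum>i=1..m. a i)) (table_counts m \<sigma>))"
    by (rule pmf_expectation_cong) (simp add: table_counts_def crp_K_eq_sum_crp_A[OF crp_permutes])
  also have "\<dots> = (\<Sum>a\<in>part_vectors m. ewens_weight m a * (\<lambda>a. G a (\<Sum>i=1..m. a i)) a)"
    by (rule expectation_crp_table_counts)
  finally show ?thesis by simp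
qed

lemma expectation_crp_A_div_K:
  assumes j: "j \<in> {1..m}"
  shows "measure_pmf.expectation (crp m) (\<lambda>\<sigma>. real (crp_A m j \<sigma>) / real (crp_K m \<sigma>))
       = mean_inv_Suc_tables (m - j) / real j"
proof -
  have "measure_pmf.expectation (crp m) (\<lambda>\<sigma>. real (crp_A m j \<sigma>) / real (crp_K m \<sigma>))
      = (\<Sum>a\<in>part_vectors m. ewens_weight m a * (real (a j) / real (\<Sum>i=1..m. a i)))"
    using expectation_crp_table_counts_K[of m "\<lambda>a k. real (a j) / real k"] by (simp add: table_counts_def)
  also have "\<dots> = 1 / real j * measure_pmf.expectation (crp (m - j)) (\<lambda>\<sigma>. 1 / (1 + real (crp_K (m - j) \<sigma>)))"
    using sum_ewens_ratio[OF j] expectation_crp_table_counts_K[of "m - j" "\<lambda>a k. 1 / (1 + real k)"]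
    by simp
  also have "\<dots> = mean_inv_Suc_tables (m - j) / real j"
    by (simp add: expectation_crp_inv_Suc_K)
  finally show ?thesis .
qed

theorem lemma2p3:
  fixes n j :: nat
  assumes "n \<ge> 2" and "1 \<le> j" and "j \<le> n - 1"
  shows
    "minclade_prob n (j + 1) =
       measure_pmf.expectation (crp (n - 1))
         (\<lambda>\<sigma>. real (crp_A (n - 1) j \<sigma>) / real (crp_K (n - 1) \<sigma>))
   \<and> measure_pmf.expectation (crp (n - 1))
         (\<lambda>\<sigma>. real (crp_A (n - 1) j \<sigma>) / real (crp_K (n - 1) \<sigma>)) =
       (\<Sum>a\<in>Gamma_set n. real (a j) / real (\<Sum>i=1..n-1. a i) *
          (\<Prod>i=1..n-1. 1 / (fact (a i) * real i ^ a i)))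
   \<and> (j < n - 1 \<longrightarrow>
       minclade_prob n (j + 1) =
         1 / real j * (\<Sum>k=1..n-1-j. 1 / fact (k + 1) *
            (\<Sum>v\<in>Delta_set (n - 1 - j) k. 1 / (\<Prod>i=1..k. real (v i)))))
   \<and> minclade_prob n n = 1 / real (n - 1)
   \<and> minclade_prob n (j + 1) =
       1 / real j * measure_pmf.expectation (crp (n - 1 - j))
         (\<lambda>\<sigma>. 1 / (1 + real (crp_K (n - 1 - j) \<sigma>)))
   \<and> measure_pmf.expectation (crp (n - 1 - j))
         (\<lambda>\<sigma>. 1 / (1 + real (crp_K (n - 1 - j) \<sigma>))) =
       measure_pmf.expectation (bern_seq (n - 1 - j))
         (\<lambda>b. 1 / (1 + (\<Sum>i=1..n-1-j. (if b i then 1 else 0 :: real))))"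
proof -
  have j: "j \<in> {1..n - 1}" using assms by simp
  have X: "minclade_prob n (j + 1) = mean_inv_Suc_tables (n - 1 - j) / real j"
    using minclade_prob_eq assms by blast
  have E: "measure_pmf.expectation (crp (n - 1)) (\<lambda>\<sigma>. real (crp_A (n - 1) j \<sigma>) / real (crp_K (n - 1) \<sigma>))
      = (\<Sum>a\<in>part_vectors (n - 1). ewens_weight (n - 1) a * (real (a j) / real (\<Sum>i=1..n-1. a i)))"
    using expectation_crp_table_counts_K[of "n - 1" "\<lambda>a k. real (a j) / real k"] by (simp add: table_counts_def)
  note Gamma = trans[OF E sum_Gamma_set_reindex[OF assms(1) j]]
  note Gamma_mean = trans[OF Gamma[symmetric] expectation_crp_A_div_K[OF j]]
  have "minclade_prob n n = mean_inv_Suc_tables 0 / real (n - 1)"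
    using minclade_prob_eq[of n "n - 1"] assms by simp
  then have X_n: "minclade_prob n n = 1 / real (n - 1)"
    by (simp add: mean_inv_Suc_tables_def)
  show ?thesis
  proof (intro conjI impI)
    assume "j < n - 1"
    then show "minclade_prob n (j + 1) = 1 / real j * (\<Sum>k=1..n-1-j. 1 / fact (k + 1) *
        (\<Sum>v\<in>Delta_set (n - 1 - j) k. 1 / (\<Prod>i=1..k. real (v i))))"
      using X mean_inv_Suc_tables_Delta_set[of "n - 1 - j"] by simp
  qed (simp_all only: X X_n Gamma Gamma_mean expectation_crp_inv_Suc_K expectation_bern_seq_inv_Suc,
      simp_all)
qed

end
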